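(* Under the hypotheses and notation below, $$S^+(z;x,y;t):=\sum_{k>0}S^{[k]}(x,y;t)z^k=\frac{zx}{(1-zx)K(x,y)}\sqrt{\frac{\Delta(\bar x)}{\Delta(z)}}=\frac{zx\,S_0(z;t)\,S(x,y;t)}{(1-zx)\sqrt{D(t)}}.$$
   Context: $\mathcal H=\{(k,0):k\le0\}$; $A\subset\mathbb{Z}^2$ finite, symmetric ($(i,j)\in A\Rightarrow(i,-j)\in A$), with small height variations ($|j|\le1$), $A_1\ne0$, and reversal-symmetric ($(i,j)\in A\Rightarrow(-i,-j)\in A$). $a^{[k]}_{i,j}(n)$ is the number of walks $(w_0,\dots,w_n)$ with steps in $A$, $w_0=(k,0)$, $w_n=(i,j)$, $w_m\notin\mathcal H$ for $1\le m\le n$; $S^{[k]}(x,y;t)=\sum a^{[k]}_{i,j}(n)x^iy^jt^n$; $S=S^{[0]}$ and $S_0(x;t)=\sum_{n,i}a^{[0]}_{i,0}(n)x^it^n$. $\bar x=1/x$, $\bar y=1/y$, $A_0(x)=\sum_{(i,0)\in A}x^i$, $A_1(x)=\sum_{(i,1)\in A}x^i$, $K(x,y)=1-tA_0(x)-t(y+\bar y)A_1(x)$, $\delta(x)=(1-tA_0(x))^2-4t^2A_1(x)^2$, and $(D,\Delta(x),\bar\Delta(\bar x))$ its canonical factorization (unique power series in $t$ with $\delta=D\Delta(x)\bar\Delta(\bar x)$, $D$ real coefficients, $\Delta(x)$ coefficients in $\mathbb{R}[x]$, $\bar\Delta$ in $\mathbb{R}[\bar x]$, $D(0)=\Delta(0;t)=\bar\Delta(0;t)=\Delta(x;0)=\bar\Delta(\bar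 x;0)=1$); here $\bar\Delta(\bar x)=\Delta(\bar x)$. Square roots have constant term $1$. *)

theory Defs
  imports "HOL-Computational_Algebra.Computational_Algebra"
begin

definition Hline :: "(int \<times> int) set" where
  "Hline = {(k, 0) | k. k \<le> 0}"

definition walk_pos :: "int \<Rightarrow> (int \<times> int) list \<Rightarrow> nat \<Rightarrow> int \<times> int" where
  "walk_pos k ss m = (k + (\<Sum>l<m. fst (ss ! l)), (\<Sum>l<m. snd (ss ! l)))"

text \<open>Walks of length n with steps in A from (k,0), avoiding H at times 1..n
  (a walk (w_0,...,w_n) is identified with its list of steps).\<close>
definition walks :: "(int \<times> int) set \<Rightarrow> int \<Rightarrow> nat \<Rightarrow> (int \<times> int) list set" where
  "walks A k n = {ss. length ss = n \<and> set ss \<subseteq> A \<and>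
                      (\<forall>m\<in>{1..n}. walk_pos k ss m \<notin> Hline)}"

definition acount :: "(int \<times> int) set \<Rightarrow> int \<Rightarrow> int \<Rightarrow> int \<Rightarrow> nat \<Rightarrow> nat" where
  "acount A k i j n = card {ss \<in> walks A k n. walk_pos k ss n = (i, j)}"

definition endpoints :: "(int \<times> int) set \<Rightarrow> int \<Rightarrow> nat \<Rightarrow> (int \<times> int) set" where
  "endpoints A k n = (\<lambda>ss. walk_pos k ss n) ` walks A k n"

text \<open>Coefficient of t^n in S^[k](X,Y;t), a Laurent polynomial evaluated in a field.\<close>
definition Scoef :: "(int \<times> int) set \<Rightarrow> int \<Rightarrow> nat \<Rightarrow> 'a::field \<Rightarrow> 'a \<Rightarrow> 'a" where
  "Scoef A k n X Y = (\<Sum>(i, j)\<in>endpoints A k n. of_nat (acount A k i j n) * X powi i * Y powi j)"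

text \<open>Coefficient of t^n in S_0(X;t).\<close>
definition S0coef :: "(int \<times> int) set \<Rightarrow> nat \<Rightarrow> 'a::field \<Rightarrow> 'a" where
  "S0coef A n X = (\<Sum>i\<in>{i. (i, 0) \<in> endpoints A 0 n}. of_nat (acount A 0 i 0 n) * X powi i)"

definition A0 :: "(int \<times> int) set \<Rightarrow> 'a::field \<Rightarrow> 'a" where
  "A0 A X = (\<Sum>i\<in>{i. (i, 0) \<in> A}. X powi i)"

definition A1 :: "(int \<times> int) set \<Rightarrow> 'a::field \<Rightarrow> 'a" where
  "A1 A X = (\<Sum>i\<in>{i. (i, 1) \<in> A}. X powi i)"

section \<open>The coefficient ring: Laurent series in z over Laurent series in x over Laurent series in y\<close>

type_synonym R = "real fls fls fls"

definition zR :: R where "zR = fls_X"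
definition xM :: "real fls fls" where "xM = fls_X"
definition yM :: "real fls fls" where "yM = fls_const fls_X"
definition xR :: R where "xR = fls_const xM"
definition yR :: R where "yR = fls_const yM"
definition cR :: "real \<Rightarrow> R" where "cR c = fls_const (fls_const (fls_const c))"

definition pev :: "real poly \<Rightarrow> R \<Rightarrow> R" where
  "pev p X = (\<Sum>i\<le>degree p. cR (coeff p i) * X ^ i)"

definition fev :: "real poly fps \<Rightarrow> R \<Rightarrow> R fps" where
  "fev F X = Abs_fps (\<lambda>n. pev (fps_nth F n) X)"

definition liftR :: "real fps \<Rightarrow> R fps" where
  "liftR f = Abs_fps (\<lambda>n. cR (fps_nth f n))"

definition fps_sqrt1 :: "R fps \<Rightarrow> R fps" where
  "fps_sqrt1 f = (THE g. g ^ 2 = f \<and> fps_nth g 0 = 1)"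

definition Sk :: "(int \<times> int) set \<Rightarrow> int \<Rightarrow> R fps" where
  "Sk A k = Abs_fps (\<lambda>n. Scoef A k n xR yR)"

text \<open>S^+(z;x,y;t) = sum_{k>0} S^[k](x,y;t) z^k, built coefficientwise in t
  (each t^n-coefficient is a power series in z with Laurent-polynomial coefficients in x,y).\<close>
definition Splus :: "(int \<times> int) set \<Rightarrow> R fps" where
  "Splus A = Abs_fps (\<lambda>n. fps_to_fls
      (Abs_fps (\<lambda>k. if k = 0 then 0 else Scoef A (int k) n xM yM)))"

definition S0z :: "(int \<times> int) set \<Rightarrow> R fps" where
  "S0z A = Abs_fps (\<lambda>n. S0coef A n zR)"

definition Kxy :: "(int \<times> int) set \<Rightarrow> R fps" where
  "Kxy A = 1 - fps_X * fps_const (A0 A xR) - fps_X * fps_const ((yR + inverse yR) * A1 A xR)"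

definition deltax :: "(int \<times> int) set \<Rightarrow> R fps" where
  "deltax A = (1 - fps_X * fps_const (A0 A xR))^2 - 4 * fps_X^2 * fps_const (A1 A xR)^2"

text \<open>Canonical factorization (D, Delta(x), Deltabar(xbar)) of delta(x).
  Delta and Deltabar are power series in t with coefficients in R[x]; Deltabar is
  evaluated at xbar = 1/x.\<close>
definition canon_fact :: "(int \<times> int) set \<Rightarrow> real fps \<Rightarrow> real poly fps \<Rightarrow> real poly fps \<Rightarrow> bool" where
  "canon_fact A D Del Delb \<longleftrightarrow>
     deltax A = liftR D * fev Del xR * fev Delb (inverse xR) \<and>
     fps_nth D 0 = 1 \<and>
     (\<forall>n. poly (fps_nth Del n) 0 = (if n = 0 then 1 else 0)) \<and>
     (\<forall>n. poly (fps_nth Delb n) 0 = (if n = 0 then 1 else 0)) \<and>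
     fps_nth Del 0 = 1 \<and> fps_nth Delb 0 = 1"

end

theory Submission
  imports Defs
begin

text \<open>
  The generating functions \<open>S\<^sup>+\<close> and \<open>S = S\<^sup>[\<^sup>0\<^sup>]\<close> are determined by the kernel equation: at
  positive order in t, K times the series is supported on the forbidden half-line H while the
  series itself vanishes on H, and the constant term in t fixes the rest.  So it suffices to
  check the closed forms against this equation.
  Symmetry of \<open>\<delta>\<close> under \<open>x \<mapsto> 1/x\<close> forces \<open>\<Delta>\<close>-bar \<open>= \<Delta>\<close>, so \<open>\<surd>\<delta> = \<surd>D \<surd>\<Delta>(x) \<surd>\<Delta>(1/x)\<close>.
  Expanding \<open>1/K\<close> in powers of \<open>y + 1/y\<close> shows that for G independent of y the coefficient
  of \<open>y\<^sup>0\<close> in \<open>G/K\<close> equals that in \<open>G/\<surd>\<delta>\<close>; for the closed forms this coefficient has only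
  positive powers of x and hence vanishes on H, while K times the closed form is, apart from its
  constant term, supported on H.  Finally \<open>S\<^sub>0(z) = \<Delta>(z)\<^sup>-\<^sup>1\<^sup>/\<^sup>2\<close> is read off from the
  coefficients of \<open>y\<^sup>0\<close> in S.
\<close>

unbundle fps_syntax

text \<open>The outer, middle and inner layers of R carry z, x and y, so \<open>coeffR r k i j\<close> is the
  coefficient of \<open>z\<^sup>k x\<^sup>i y\<^sup>j\<close>.\<close>

definition coeffR :: "R \<Rightarrow> int \<Rightarrow> int \<Rightarrow> int \<Rightarrow> real" where
  "coeffR r k i j = r $$ k $$ i $$ j"

lemma coeffR_eqI: "(\<And>k i j. coeffR r k i j = coeffR s k i j) \<Longrightarrow> r = s"
  unfolding coeffR_def by (intro fls_eqI) auto

lemma coeffR_add [simp]: "coeffR (r + s) k i j = coeffR r k i j + coeffR s k i j"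
  and coeffR_diff [simp]: "coeffR (r - s) k i j = coeffR r k i j - coeffR s k i j"
  and coeffR_uminus [simp]: "coeffR (- r) k i j = - coeffR r k i j"
  and coeffR_0 [simp]: "coeffR 0 k i j = 0"
  by (simp_all add: coeffR_def)

lemma coeffR_1: "coeffR 1 k i j = (if k = 0 \<and> i = 0 \<and> j = 0 then 1 else 0)"
  by (simp add: coeffR_def)

lemma coeffR_sum: "coeffR (\<Sum>e\<in>E. f e) k i j = (\<Sum>e\<in>E. coeffR (f e) k i j)"
  by (simp add: coeffR_def fls_nth_sum)

lemma fls_times_nth_nonzero:
  assumes "\<phi> ((f * g) $$ n) \<noteq> 0" and "\<And>(E :: int set) h. \<phi> (sum h E) = (\<Sum>e\<in>E. \<phi> (h e))"
  obtains m where "\<phi> (f $$ m * g $$ (n - m)) \<noteq> 0"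
proof -
  have "\<phi> ((f * g) $$ n) = (\<Sum>m = fls_subdegree f..n - fls_subdegree g. \<phi> (f $$ m * g $$ (n - m)))"
    unfolding fls_times_nth(2) by (rule assms(2))
  with assms(1) that show ?thesis by (auto dest: sum.not_neutral_contains_not_neutral)
qed

lemma coeffR_mult_nonzero:
  assumes "coeffR (r * s) k i j \<noteq> 0"
  obtains k' i' j' where "coeffR r k' i' j' \<noteq> 0" "coeffR s (k - k') (i - i') (j - j') \<noteq> 0"
proof -
  obtain k' where "(r $$ k' * s $$ (k - k')) $$ i $$ j \<noteq> 0"
    using assms unfolding coeffR_def
    by (rule fls_times_nth_nonzero[where \<phi> = "\<lambda>c. c $$ i $$ j"]) (simp add: fls_nth_sum)
  then obtain i' where "(r $$ k' $$ i' * s $$ (k - k') $$ (i - i')) $$ j \<noteq> 0"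
    by (rule fls_times_nth_nonzero[where \<phi> = "\<lambda>c. c $$ j"]) (simp add: fls_nth_sum)
  then obtain j' where "r $$ k' $$ i' $$ j' * s $$ (k - k') $$ (i - i') $$ (j - j') \<noteq> 0"
    by (rule fls_times_nth_nonzero[where \<phi> = "\<lambda>c. c"]) simp
  then show ?thesis using that unfolding coeffR_def by auto
qed

lemma cR_add: "cR (a + b) = cR a + cR b"
  and cR_mult: "cR (a * b) = cR a * cR b"
  by (simp_all add: cR_def fls_plus_const)

lemma cR_0 [simp]: "cR 0 = 0" and cR_1 [simp]: "cR 1 = 1"
  and cR_numeral: "cR (numeral w) = numeral w"
  and cR_of_nat: "cR (of_nat m) = of_nat m"
  and cR_eq_0_iff: "cR c = 0 \<longleftrightarrow> c = 0"
  by (simp_all add: cR_def fls_of_nat)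

lemma cR_sum: "cR (\<Sum>e\<in>E. f e) = (\<Sum>e\<in>E. cR (f e))"
  by (induction E rule: infinite_finite_induct) (auto simp: cR_add)

lemma coeffR_cR_mult [simp]: "coeffR (cR c * r) k i j = c * coeffR r k i j"
  by (simp add: coeffR_def cR_def)

lemma coeffR_numeral_mult [simp]: "coeffR (numeral w * r) k i j = numeral w * coeffR r k i j"
  using coeffR_cR_mult[of "numeral w"] by (simp add: cR_numeral)

definition monoR :: "int \<Rightarrow> int \<Rightarrow> int \<Rightarrow> R" where
  "monoR k i j = zR powi k * xR powi i * yR powi j"

lemma coeffR_monoR_mult: "coeffR (monoR k' i' j' * r) k i j = coeffR r (k - k') (i - i') (j - j')"
proof -
  have "monoR k' i' j' = fls_X_intpow k' * fls_const (fls_X_intpow i' * fls_const (fls_X_intpow j'))"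
    by (simp add: monoR_def zR_def xR_def yR_def xM_def yM_def flip: fls_const_power_int)
  then show ?thesis
    by (simp add: coeffR_def fls_X_intpow_times_conv_shift fls_shifted_times_simps mult.assoc)
qed

lemma coeffR_monoR: "coeffR (monoR k' i' j') k i j = (if k = k' \<and> i = i' \<and> j = j' then 1 else 0)"
  using coeffR_monoR_mult[of k' i' j' 1 k i j] by (simp add: coeffR_1)

lemma monoR_mult: "monoR k i j * monoR k' i' j' = monoR (k + k') (i + i') (j + j')"
  by (rule coeffR_eqI) (simp add: coeffR_monoR_mult coeffR_monoR)

lemma monoR_0_0_0 [simp]: "monoR 0 0 0 = 1"
  by (simp add: monoR_def)

lemma monoR_power: "monoR k i j ^ m = monoR (int m * k) (int m * i) (int m * j)"
  by (induction m) (simp_all add: monoR_mult algebra_simps)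

lemma monoR_nonzero: "monoR k i j \<noteq> 0"
  using coeffR_monoR[of k i j k i j] by auto

lemma inverse_monoR: "inverse (monoR k i j) = monoR (- k) (- i) (- j)"
  using monoR_mult[of k i j "- k" "- i" "- j"] monoR_nonzero[of k i j]
  by (simp add: inverse_unique)

lemma xR_monoR: "xR = monoR 0 1 0" and yR_monoR: "yR = monoR 0 0 1" and zR_monoR: "zR = monoR 1 0 0"
  by (simp_all add: monoR_def)

lemma xR_powi: "xR powi n = monoR 0 n 0" and yR_powi: "yR powi n = monoR 0 0 n"
  and zR_powi: "zR powi n = monoR n 0 0"
  by (simp_all add: monoR_def)

lemma xR_power: "xR ^ m = monoR 0 (int m) 0" and zR_power: "zR ^ m = monoR (int m) 0 0"
  and inverse_xR_power: "inverse xR ^ m = monoR 0 (- int m) 0"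
  by (simp_all add: xR_monoR zR_monoR inverse_monoR monoR_power)

lemma coeffR_sum_monoR:
  assumes "finite E"
  shows "coeffR (\<Sum>e\<in>E. cR (w e) * monoR (fk e) (fi e) (fj e)) k i j =
         (\<Sum>e\<in>{e\<in>E. fk e = k \<and> fi e = i \<and> fj e = j}. w e)"
  unfolding sum.inter_filter[OF assms] by (auto simp: coeffR_sum coeffR_monoR intro!: sum.cong)

definition suppR :: "R \<Rightarrow> (int \<Rightarrow> int \<Rightarrow> int \<Rightarrow> bool) \<Rightarrow> bool" where
  "suppR r P \<longleftrightarrow> (\<forall>k i j. coeffR r k i j \<noteq> 0 \<longrightarrow> P k i j)"

definition suppF :: "R fps \<Rightarrow> (nat \<Rightarrow> int \<Rightarrow> int \<Rightarrow> int \<Rightarrow> bool) \<Rightarrow> bool" where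
  "suppF F P \<longleftrightarrow> (\<forall>n. suppR (F $ n) (P n))"

lemma suppR_coeffR: "suppR r P \<Longrightarrow> \<not> P k i j \<Longrightarrow> coeffR r k i j = 0"
  unfolding suppR_def by blast

lemma suppF_coeffR: "suppF F P \<Longrightarrow> \<not> P n k i j \<Longrightarrow> coeffR (F $ n) k i j = 0"
  unfolding suppF_def suppR_def by blast

lemma suppR_0 [simp]: "suppR 0 P"
  by (simp add: suppR_def)

lemma suppR_add: "suppR r P \<Longrightarrow> suppR s P \<Longrightarrow> suppR (r + s) P"
  unfolding suppR_def by (metis add.right_neutral coeffR_add)

lemma suppR_diff: "suppR r P \<Longrightarrow> suppR s P \<Longrightarrow> suppR (r - s) P"
  unfolding suppR_def by (metis diff_zero coeffR_diff)

lemma suppR_sum: "(\<And>e. e \<in> E \<Longrightarrow> suppR (f e) P) \<Longrightarrow> suppR (\<Sum>e\<in>E. f e) P"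
  by (induction E rule: infinite_finite_induct) (auto intro: suppR_add)

lemma suppR_cR_mult: "suppR r P \<Longrightarrow> suppR (cR c * r) P"
  by (simp add: suppR_def)

lemma suppR_monoR: "P k i j \<Longrightarrow> suppR (monoR k i j) P"
  by (simp add: suppR_def coeffR_monoR)

lemma suppR_mult:
  assumes "suppR r P" "suppR s Q"
    and "\<And>k i j k' i' j'. P k i j \<Longrightarrow> Q k' i' j' \<Longrightarrow> S (k + k') (i + i') (j + j')"
  shows "suppR (r * s) S"
  unfolding suppR_def
proof (intro allI impI)
  fix k i j
  assume "coeffR (r * s) k i j \<noteq> 0"
  then obtain k' i' j' where "coeffR r k' i' j' \<noteq> 0" "coeffR s (k - k') (i - i') (j - j') \<noteq> 0"
    by (rule coeffR_mult_nonzero)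
  then show "S k i j"
    using assms(1,2) assms(3)[of k' i' j' "k - k'" "i - i'" "j - j'"] by (simp add: suppR_def)
qed

lemma suppF_const: "suppR r P \<Longrightarrow> suppF (fps_const r) (\<lambda>n k i j. n = 0 \<and> P k i j)"
  by (simp add: suppF_def suppR_def)

lemma suppF_mult:
  assumes "suppF F P" "suppF G Q"
    and "\<And>n k i j n' k' i' j'. P n k i j \<Longrightarrow> Q n' k' i' j' \<Longrightarrow> S (n + n') (k + k') (i + i') (j + j')"
  shows "suppF (F * G) S"
  unfolding suppF_def fps_mult_nth
proof (intro allI suppR_sum)
  fix n m :: nat
  assume "m \<in> {0..n}"
  then have "S n = S (m + (n - m))" by simp
  moreover have "suppR (F $ m * G $ (n - m)) (S (m + (n - m)))"
    using assms by (auto simp: suppF_def intro!: suppR_mult)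
  ultimately show "suppR (F $ m * G $ (n - m)) (S n)" by simp
qed

definition y_free :: "R \<Rightarrow> bool" where
  "y_free r \<longleftrightarrow> suppR r (\<lambda>k i j. j = 0)"

lemma y_free_add: "y_free r \<Longrightarrow> y_free s \<Longrightarrow> y_free (r + s)"
  and y_free_mult: "y_free r \<Longrightarrow> y_free s \<Longrightarrow> y_free (r * s)"
  unfolding y_free_def by (auto intro: suppR_add suppR_mult)

lemma y_free_0: "y_free 0"
  by (simp add: y_free_def)

lemma y_free_sum: "(\<And>e. e \<in> E \<Longrightarrow> y_free (f e)) \<Longrightarrow> y_free (\<Sum>e\<in>E. f e)"
  unfolding y_free_def by (rule suppR_sum)

lemma y_free_fps_mult_nth:
  assumes "\<And>l. l \<le> n \<Longrightarrow> y_free (F $ l)" "\<And>l. l \<le> n \<Longrightarrow> y_free (G $ l)"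
  shows "y_free ((F * G) $ n)"
  unfolding fps_mult_nth by (rule y_free_sum) (auto intro!: y_free_mult assms)

lemma suppF_y_free_iff: "suppF F (\<lambda>n k i j. j = 0) \<longleftrightarrow> (\<forall>n. y_free (F $ n))"
  by (simp add: suppF_def y_free_def)

lemma suppF_y_free_power:
  assumes "suppF F (\<lambda>n k i j. j = 0)"
  shows "suppF (F ^ m) (\<lambda>n k i j. j = 0)"
proof (induction m)
  case 0
  then show ?case by (simp add: suppF_def suppR_def coeffR_1)
next
  case (Suc m)
  then show ?case by (auto intro: suppF_mult[OF assms])
qed

definition fps_map :: "('a \<Rightarrow> 'b) \<Rightarrow> 'a fps \<Rightarrow> 'b fps" where
  "fps_map \<phi> F = Abs_fps (\<lambda>n. \<phi> (F $ n))"

lemma fps_map_nth [simp]: "fps_map \<phi> F $ n = \<phi> (F $ n)"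
  by (simp add: fps_map_def)

lemma fps_map_mult:
  fixes \<phi> :: "'a::comm_ring_1 \<Rightarrow> 'b::comm_ring_1"
  assumes add: "\<And>a b. \<phi> (a + b) = \<phi> a + \<phi> b" and mult: "\<And>a b. \<phi> (a * b) = \<phi> a * \<phi> b"
    and zero: "\<phi> 0 = 0"
  shows "fps_map \<phi> (F * G) = fps_map \<phi> F * fps_map \<phi> G"
proof -
  have "\<phi> (sum f E) = (\<Sum>e\<in>E. \<phi> (f e))" for f and E :: "nat set"
    by (induction E rule: infinite_finite_induct) (auto simp: add zero)
  then show ?thesis by (intro fps_ext) (simp add: fps_mult_nth mult)
qed

lemma fps_map_add:
  "(\<And>a b. \<phi> (a + b) = \<phi> a + \<phi> b) \<Longrightarrow> fps_map \<phi> (F + G) = fps_map \<phi> F + fps_map \<phi> G"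
  by (intro fps_ext) simp

lemma fps_map_1: "\<phi> 1 = 1 \<Longrightarrow> \<phi> 0 = 0 \<Longrightarrow> fps_map \<phi> 1 = 1"
  by (intro fps_ext) simp

lemma fps_map_X: "\<phi> 1 = 1 \<Longrightarrow> \<phi> 0 = 0 \<Longrightarrow> fps_map \<phi> fps_X = fps_X"
  by (intro fps_ext) (simp add: fps_X_def)

lemma fps_map_power:
  fixes \<phi> :: "'a::comm_ring_1 \<Rightarrow> 'b::comm_ring_1"
  assumes "\<And>a b. \<phi> (a + b) = \<phi> a + \<phi> b" "\<And>a b. \<phi> (a * b) = \<phi> a * \<phi> b" "\<phi> 0 = 0" "\<phi> 1 = 1"
  shows "fps_map \<phi> (F ^ m) = fps_map \<phi> F ^ m"
  by (induction m) (simp_all add: assms fps_map_mult fps_map_1)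

lemma pev_eq_poly: "pev p X = poly (map_poly cR p) X"
  unfolding pev_def poly_altdef by (simp add: degree_map_poly cR_eq_0_iff coeff_map_poly)

lemma map_poly_cR_add: "map_poly cR (p + q) = map_poly cR p + map_poly cR q"
  by (rule poly_eqI) (simp add: coeff_map_poly cR_add)

lemma map_poly_cR_mult: "map_poly cR (p * q) = map_poly cR p * map_poly cR q"
  by (rule poly_eqI) (simp add: coeff_map_poly coeff_mult cR_sum cR_mult)

lemma pev_add: "pev (p + q) X = pev p X + pev q X"
  and pev_mult: "pev (p * q) X = pev p X * pev q X"
  and pev_0 [simp]: "pev 0 X = 0"
  and pev_1 [simp]: "pev 1 X = 1"
  by (simp_all add: pev_eq_poly map_poly_cR_add map_poly_cR_mult)

lemma fev_eq_fps_map: "fev F X = fps_map (\<lambda>p. pev p X) F"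
  by (simp add: fev_def fps_map_def)

lemma liftR_eq_fps_map: "liftR f = fps_map cR f"
  by (simp add: liftR_def fps_map_def)

lemma fev_nth [simp]: "fev F X $ n = pev (F $ n) X"
  and liftR_nth [simp]: "liftR f $ n = cR (f $ n)"
  by (simp_all add: fev_def liftR_def)

lemma fev_mult: "fev (F * G) X = fev F X * fev G X"
  unfolding fev_eq_fps_map by (rule fps_map_mult) (simp_all add: pev_add pev_mult)

lemma fev_1 [simp]: "fev 1 X = 1"
  unfolding fev_eq_fps_map by (rule fps_map_1) simp_all

lemma fev_power: "fev (F ^ m) X = fev F X ^ m"
  unfolding fev_eq_fps_map by (rule fps_map_power) (simp_all add: pev_add pev_mult)

lemma liftR_mult: "liftR (f * g) = liftR f * liftR g"
  unfolding liftR_eq_fps_map by (rule fps_map_mult) (simp_all add: cR_add cR_mult)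

lemma liftR_1 [simp]: "liftR 1 = 1"
  unfolding liftR_eq_fps_map by (rule fps_map_1) simp_all

lemma liftR_eq_fev: "liftR f = fev (fps_map (\<lambda>c. [:c:]) f) X"
  by (rule fps_ext) (simp add: pev_def)

lemma coeffR_pev_monoR_power:
  assumes "\<And>m. X ^ m = monoR (fk m) (fi m) 0"
  shows "coeffR (pev p X) k i j = (\<Sum>m\<in>{m\<in>{..degree p}. fk m = k \<and> fi m = i \<and> 0 = j}. coeff p m)"
  unfolding pev_def assms by (simp add: coeffR_sum_monoR)

lemma sum_coeff_int_index:
  "(\<Sum>m\<in>{m\<in>{..degree p}. int m = i}. coeff p m) = (if 0 \<le> i then coeff p (nat i) else 0)"
proof (cases "0 \<le> i \<and> nat i \<le> degree p")
  case True
  then have "{m\<in>{..degree p}. int m = i} = {nat i}" by auto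
  then show ?thesis using True by simp
next
  case False
  then have empty: "{m\<in>{..degree p}. int m = i} = {}" by auto
  show ?thesis using False by (subst empty) (auto simp: coeff_eq_0)
qed

lemma coeffR_pev_xR:
  "coeffR (pev p xR) k i j = (if k = 0 \<and> j = 0 \<and> 0 \<le> i then coeff p (nat i) else 0)"
proof -
  have "coeffR (pev p xR) k i j = (\<Sum>m\<in>{m\<in>{..degree p}. 0 = k \<and> int m = i \<and> 0 = j}. coeff p m)"
    by (rule coeffR_pev_monoR_power) (rule xR_power)
  also have "\<dots> = (if k = 0 \<and> j = 0 then (\<Sum>m\<in>{m\<in>{..degree p}. int m = i}. coeff p m) else 0)"
    by auto
  finally show ?thesis using sum_coeff_int_index[of p i] by simp
qed

lemma coeffR_pev_inverse_xR:
  "coeffR (pev p (inverse xR)) k i j = (if k = 0 \<and> j = 0 \<and> i \<le> 0 then coeff p (nat (- i)) else 0)"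
proof -
  have "coeffR (pev p (inverse xR)) k i j = (\<Sum>m\<in>{m\<in>{..degree p}. 0 = k \<and> - int m = i \<and> 0 = j}. coeff p m)"
    by (rule coeffR_pev_monoR_power) (rule inverse_xR_power)
  also have "\<dots> = (if k = 0 \<and> j = 0 then (\<Sum>m\<in>{m\<in>{..degree p}. int m = - i}. coeff p m) else 0)"
    by (auto intro!: sum.cong)
  finally show ?thesis using sum_coeff_int_index[of p "- i"] by simp
qed

lemma coeffR_pev_zR:
  "coeffR (pev p zR) k i j = (if i = 0 \<and> j = 0 \<and> 0 \<le> k then coeff p (nat k) else 0)"
proof -
  have "coeffR (pev p zR) k i j = (\<Sum>m\<in>{m\<in>{..degree p}. int m = k \<and> 0 = i \<and> 0 = j}. coeff p m)"
    by (rule coeffR_pev_monoR_power) (rule zR_power)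
  also have "\<dots> = (if i = 0 \<and> j = 0 then (\<Sum>m\<in>{m\<in>{..degree p}. int m = k}. coeff p m) else 0)"
    by auto
  finally show ?thesis using sum_coeff_int_index[of p k] by simp
qed

lemma suppF_fev_xR: "suppF (fev F xR) (\<lambda>n k i j. k = 0 \<and> j = 0 \<and> 0 \<le> i)"
  and suppF_fev_inverse_xR: "suppF (fev F (inverse xR)) (\<lambda>n k i j. k = 0 \<and> j = 0 \<and> i \<le> 0)"
  and suppF_fev_zR: "suppF (fev F zR) (\<lambda>n k i j. i = 0 \<and> j = 0 \<and> 0 \<le> k)"
  by (auto simp: suppF_def suppR_def coeffR_pev_xR coeffR_pev_inverse_xR coeffR_pev_zR
      split: if_splits)

lemma suppF_liftR: "suppF (liftR f) (\<lambda>n k i j. k = 0 \<and> i = 0 \<and> j = 0)"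
  by (auto simp: suppF_def suppR_def coeffR_def cR_def)

lemma suppF_fev_xR_normalized:
  assumes "fps_map (\<lambda>p. poly p 0) F = 1"
  shows "suppF (fev F xR) (\<lambda>n k i j. k = 0 \<and> j = 0 \<and> 0 \<le> i \<and> (n \<noteq> 0 \<longrightarrow> 0 < i))"
  unfolding suppF_def suppR_def
proof (intro allI impI)
  fix n k i j
  assume nz: "coeffR (fev F xR $ n) k i j \<noteq> 0"
  have "poly (F $ n) 0 = (if n = 0 then 1 else 0)"
    using fps_eq_iff[THEN iffD1, OF assms] by simp
  then have "n \<noteq> 0 \<Longrightarrow> coeff (F $ n) 0 = 0" by (simp add: poly_0_coeff_0)
  with nz show "k = 0 \<and> j = 0 \<and> 0 \<le> i \<and> (n \<noteq> 0 \<longrightarrow> 0 < i)"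
    by (cases "i = 0") (auto simp: coeffR_pev_xR split: if_splits)
qed

definition fps_sqrt_binomial :: "(real \<Rightarrow> 'a::comm_ring_1) \<Rightarrow> 'a fps \<Rightarrow> 'a fps" where
  "fps_sqrt_binomial \<phi> P = fps_map \<phi> (fps_binomial (1/2)) oo (P - 1)"

lemma
  fixes \<phi> :: "real \<Rightarrow> 'a::idom"
  assumes add: "\<And>a b. \<phi> (a + b) = \<phi> a + \<phi> b" and mult: "\<And>a b. \<phi> (a * b) = \<phi> a * \<phi> b"
    and zero: "\<phi> 0 = 0" and one: "\<phi> 1 = 1" and P0: "P $ 0 = 1"
  shows fps_sqrt_binomial_power2: "fps_sqrt_binomial \<phi> P ^ 2 = P"
    and fps_sqrt_binomial_nth_0: "fps_sqrt_binomial \<phi> P $ 0 = 1"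
proof -
  have "fps_map \<phi> (fps_binomial (1/2)) ^ 2 = fps_map \<phi> (fps_binomial (1/2) ^ 2)"
    by (simp add: fps_map_power add mult zero one)
  also have "fps_binomial (1/2) ^ 2 = (1 + fps_X :: real fps)"
    by (simp add: fps_binomial_power fps_binomial_1)
  also have "fps_map \<phi> (1 + fps_X) = 1 + fps_X"
    by (simp add: fps_map_add fps_map_1 fps_map_X add zero one)
  finally have "fps_map \<phi> (fps_binomial (1/2)) ^ 2 = 1 + fps_X" .
  moreover have "(P - 1) $ 0 = 0" using P0 by simp
  ultimately show "fps_sqrt_binomial \<phi> P ^ 2 = P"
    unfolding fps_sqrt_binomial_def power2_eq_square
    by (simp add: fps_compose_mult_distrib[symmetric] fps_compose_add_distrib)
  show "fps_sqrt_binomial \<phi> P $ 0 = 1"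
    by (simp add: fps_sqrt_binomial_def fps_compose_nth one)
qed

lemma fps_power2_eq_imp_eq:
  fixes f g :: "'a::{idom,ring_char_0} fps"
  assumes "f ^ 2 = g ^ 2" "f $ 0 = g $ 0" "f $ 0 \<noteq> 0"
  shows "f = g"
proof -
  have "(f - g) * (f + g) = 0" using assms(1) by (simp add: power2_eq_square algebra_simps)
  moreover have "(f + g) $ 0 \<noteq> 0" using assms(2,3) by simp
  then have "f + g \<noteq> 0" by (metis fps_zero_nth)
  ultimately show ?thesis by simp
qed

lemma fps_sqrt1_eqI: "g ^ 2 = f \<Longrightarrow> g $ 0 = 1 \<Longrightarrow> fps_sqrt1 f = g"
  unfolding fps_sqrt1_def by (rule the_equality) (auto intro: fps_power2_eq_imp_eq)

lemma fps_map_poly0_mult: "fps_map (\<lambda>p. poly p 0) (F * G) = fps_map (\<lambda>p. poly p 0) F * fps_map (\<lambda>p. poly p 0) G"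
  and fps_map_poly0_power: "fps_map (\<lambda>p. poly p (0::real)) (F ^ m) = fps_map (\<lambda>p. poly p 0) F ^ m"
  by (simp_all add: fps_map_mult fps_map_power)

lemma fps_map_poly0_sqrt_binomial:
  fixes P :: "real poly fps"
  assumes "P $ 0 = 1" "fps_map (\<lambda>p. poly p 0) P = 1"
  shows "fps_map (\<lambda>p. poly p 0) (fps_sqrt_binomial (\<lambda>c. [:c:]) P) = 1"
proof (rule fps_power2_eq_imp_eq)
  show "fps_map (\<lambda>p. poly p 0) (fps_sqrt_binomial (\<lambda>c. [:c:]) P) ^ 2 = 1 ^ 2"
    using assms by (simp add: fps_sqrt_binomial_power2 flip: fps_map_poly0_power)
qed (use assms in \<open>simp_all add: fps_sqrt_binomial_nth_0\<close>)

lemma fps_right_inverse_1: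
  fixes P :: "'a::ring_1 fps"
  assumes "P $ 0 = 1"
  shows "P * fps_right_inverse P 1 = 1" "fps_right_inverse P 1 $ 0 = 1"
  using fps_right_inverse[of P 1] assms by simp_all

lemma fps_map_poly0_right_inverse:
  fixes P :: "real poly fps"
  assumes "P $ 0 = 1" "fps_map (\<lambda>p. poly p 0) P = 1"
  shows "fps_map (\<lambda>p. poly p 0) (fps_right_inverse P 1) = 1"
  using fps_map_poly0_mult[of P "fps_right_inverse P 1"] assms
  by (simp add: fps_right_inverse_1 fps_map_1)

lemma fev_right_inverse: "P $ 0 = 1 \<Longrightarrow> fev (fps_right_inverse P 1) X = inverse (fev P X)"
  by (rule fps_inverse_unique[symmetric]) (metis fev_mult fev_1 fps_right_inverse_1(1))

lemma walks_finite: "finite A \<Longrightarrow> finite (walks A k n)"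
  by (rule finite_subset[OF _ finite_lists_length_eq[of A n]]) (auto simp: walks_def)

lemma endpoints_finite: "finite A \<Longrightarrow> finite (endpoints A k n)"
  by (simp add: endpoints_def walks_finite)

lemma walk_pos_snoc: "m \<le> length ss \<Longrightarrow> walk_pos k (ss @ [s]) m = walk_pos k ss m"
  by (simp add: walk_pos_def nth_append)

lemma walk_pos_snoc_last:
  "walk_pos k (ss @ [s]) (Suc (length ss)) =
     (fst (walk_pos k ss (length ss)) + fst s, snd (walk_pos k ss (length ss)) + snd s)"
  by (simp add: walk_pos_def nth_append)

lemma snoc_in_walks_iff:
  "ss @ [s] \<in> walks A k (Suc n) \<longleftrightarrow>
     ss \<in> walks A k n \<and> s \<in> A \<and> walk_pos k (ss @ [s]) (Suc n) \<notin> Hline"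
proof -
  have "(\<forall>m\<in>{1..Suc n}. P m) \<longleftrightarrow> (\<forall>m\<in>{1..n}. P m) \<and> P (Suc n)" for P
    by (simp add: atLeastAtMostSuc_conv conj_commute)
  then show ?thesis
    by (auto simp: walks_def walk_pos_snoc)
qed

lemma walks_Suc_ending_at:
  assumes "(i, j) \<notin> Hline"
  shows "{ss \<in> walks A k (Suc n). walk_pos k ss (Suc n) = (i, j)} =
    (\<lambda>(s, ss). ss @ [s]) ` (SIGMA s:A. {ss \<in> walks A k n. walk_pos k ss n = (i - fst s, j - snd s)})"
    (is "?T = ?f ` ?B")
proof
  show "?f ` ?B \<subseteq> ?T"
  proof
    fix ss'
    assume "ss' \<in> ?f ` ?B"
    then obtain s ss where "s \<in> A" "ss \<in> walks A k n" "ss' = ss @ [s]"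
      and pos: "walk_pos k ss n = (i - fst s, j - snd s)" by fastforce
    moreover have "length ss = n" using \<open>ss \<in> walks A k n\<close> by (simp add: walks_def)
    ultimately show "ss' \<in> ?T"
      using assms walk_pos_snoc_last[of k ss s] by (simp add: snoc_in_walks_iff)
  qed
  show "?T \<subseteq> ?f ` ?B"
  proof
    fix ss'
    assume ss': "ss' \<in> ?T"
    then have "ss' \<noteq> []" by (auto simp: walks_def)
    then obtain ss s where dec: "ss' = ss @ [s]" by (metis rev_exhaust)
    with ss' have "ss \<in> walks A k n" "s \<in> A"
      by (simp_all add: snoc_in_walks_iff)
    moreover from \<open>ss \<in> walks A k n\<close> have "length ss = n" by (simp add: walks_def)
    with ss' dec have "walk_pos k ss n = (i - fst s, j - snd s)"
      using walk_pos_snoc_last[of k ss s] by auto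
    ultimately show "ss' \<in> ?f ` ?B"
      unfolding dec by (intro image_eqI[of _ _ "(s, ss)"]) auto
  qed
qed

lemma acount_Hline:
  assumes "n \<ge> 1" "(i, j) \<in> Hline"
  shows "acount A k i j n = 0"
proof -
  have "{ss \<in> walks A k n. walk_pos k ss n = (i, j)} = {}"
    using assms by (auto simp: walks_def dest!: bspec[where x = n])
  then show ?thesis by (simp only: acount_def card.empty)
qed

lemma acount_Suc:
  assumes "finite A"
  shows "acount A k i j (Suc n) =
    (if (i, j) \<in> Hline then 0 else (\<Sum>s\<in>A. acount A k (i - fst s) (j - snd s) n))"
proof (cases "(i, j) \<in> Hline")
  case True
  then show ?thesis by (simp add: acount_Hline)
next
  case False
  have "inj_on (\<lambda>(s, ss). ss @ [s])
      (SIGMA s:A. {ss \<in> walks A k n. walk_pos k ss n = (i - fst s, j - snd s)})"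
    by (rule inj_onI) auto
  then have "acount A k i j (Suc n) =
      card (SIGMA s:A. {ss \<in> walks A k n. walk_pos k ss n = (i - fst s, j - snd s)})"
    unfolding acount_def walks_Suc_ending_at[OF False] by (rule card_image)
  also have "\<dots> = (\<Sum>s\<in>A. acount A k (i - fst s) (j - snd s) n)"
    using assms walks_finite[OF assms] by (subst card_SigmaI) (auto simp: acount_def)
  finally show ?thesis using False by simp
qed

lemma acount_0: "acount A k i j 0 = (if i = k \<and> j = 0 then 1 else 0)"
proof -
  have "walks A k 0 = {[]}" by (auto simp: walks_def)
  then show ?thesis by (auto simp: acount_def walk_pos_def)
qed

lemma acount_eq_0_if_not_endpoint:
  assumes "(i, j) \<notin> endpoints A k n"
  shows "acount A k i j n = 0"
proof -
  have "{ss \<in> walks A k n. walk_pos k ss n = (i, j)} = {}"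
    using assms unfolding endpoints_def by (metis (mono_tags, lifting) empty_Collect_eq image_eqI)
  then show ?thesis by (simp only: acount_def card.empty)
qed

lemma coeffR_Scoef:
  assumes "finite A"
  shows "coeffR (Scoef A k n xR yR) k' i j = (if k' = 0 then real (acount A k i j n) else 0)"
proof -
  have "Scoef A k n xR yR =
      (\<Sum>e\<in>endpoints A k n. cR (real (acount A k (fst e) (snd e) n)) * monoR 0 (fst e) (snd e))"
    unfolding Scoef_def by (intro sum.cong) (auto simp: cR_of_nat xR_powi yR_powi monoR_mult)
  then have "coeffR (Scoef A k n xR yR) k' i j =
      (\<Sum>e\<in>{e\<in>endpoints A k n. 0 = k' \<and> fst e = i \<and> snd e = j}. real (acount A k (fst e) (snd e) n))"
    by (simp add: coeffR_sum_monoR endpoints_finite[OF assms])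
  also have "\<dots> = (if k' = 0 then real (acount A k i j n) else 0)"
  proof (cases "k' = 0 \<and> (i, j) \<in> endpoints A k n")
    case True
    then have "{e\<in>endpoints A k n. 0 = k' \<and> fst e = i \<and> snd e = j} = {(i, j)}" by auto
    then show ?thesis using True by simp
  next
    case False
    then have "{e\<in>endpoints A k n. 0 = k' \<and> fst e = i \<and> snd e = j} = {}" by auto
    then show ?thesis using False acount_eq_0_if_not_endpoint[of i j A k n] by simp
  qed
  finally show ?thesis .
qed

lemma coeffR_Sk:
  "finite A \<Longrightarrow> coeffR (Sk A k $ n) k' i j = (if k' = 0 then real (acount A k i j n) else 0)"
  by (simp add: Sk_def coeffR_Scoef)

lemma coeffR_Splus:
  assumes "finite A"
  shows "coeffR (Splus A $ n) k i j = (if 0 < k then real (acount A k i j n) else 0)"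
proof -
  have "fls_const (sum f E) = (\<Sum>e\<in>E. fls_const (f e))" for f :: "int \<times> int \<Rightarrow> real fls fls" and E
    by (induction E rule: infinite_finite_induct) (simp_all flip: fls_plus_const)
  then have "fls_const (Scoef A k n xM yM) = Scoef A k n xR yR" for k
    unfolding Scoef_def case_prod_unfold
    by (simp add: fls_of_nat fls_const_power_int xR_def yR_def flip: fls_const_mult_const)
  moreover have "coeffR (Splus A $ n) k i j =
      (if 0 < k then coeffR (fls_const (Scoef A k n xM yM)) 0 i j else 0)"
    by (auto simp: Splus_def coeffR_def)
  ultimately show ?thesis by (simp add: coeffR_Scoef assms)
qed

lemma coeffR_S0z:
  assumes "finite A"
  shows "coeffR (S0z A $ n) k i j = (if i = 0 \<and> j = 0 then real (acount A 0 k 0 n) else 0)"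
proof -
  let ?E = "{i. (i, 0) \<in> endpoints A 0 n}"
  have "?E \<subseteq> fst ` endpoints A 0 n" by force
  then have fin: "finite ?E" using endpoints_finite[OF assms] finite_subset by blast
  have "S0z A $ n = (\<Sum>e\<in>?E. cR (real (acount A 0 e 0 n)) * monoR e 0 0)"
    unfolding S0z_def S0coef_def by (simp add: cR_of_nat zR_powi)
  then have "coeffR (S0z A $ n) k i j = (\<Sum>e\<in>{e\<in>?E. e = k \<and> 0 = i \<and> 0 = j}. real (acount A 0 e 0 n))"
    by (simp add: coeffR_sum_monoR fin)
  also have "\<dots> = (if i = 0 \<and> j = 0 then real (acount A 0 k 0 n) else 0)"
  proof (cases "i = 0 \<and> j = 0 \<and> k \<in> ?E")
    case True
    then have "{e\<in>?E. e = k \<and> 0 = i \<and> 0 = j} = {k}" by auto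
    then show ?thesis using True by simp
  next
    case False
    then have "{e\<in>?E. e = k \<and> 0 = i \<and> 0 = j} = {}" by auto
    then show ?thesis using False acount_eq_0_if_not_endpoint[of k 0 A 0 n] by auto
  qed
  finally show ?thesis .
qed

section \<open>The kernel equation\<close>

lemma Hline_iff: "(i, j) \<in> Hline \<longleftrightarrow> j = 0 \<and> i \<le> 0"
  by (auto simp: Hline_def)

definition step_poly :: "(int \<times> int) set \<Rightarrow> R" where
  "step_poly A = (\<Sum>s\<in>A. monoR 0 (fst s) (snd s))"

lemma step_poly_eq:
  assumes fin: "finite A" and sym: "\<And>i j. (i, j) \<in> A \<Longrightarrow> (i, - j) \<in> A"
    and small: "\<And>i j. (i, j) \<in> A \<Longrightarrow> \<bar>j\<bar> \<le> 1"
  shows "step_poly A = A0 A xR + (yR + inverse yR) * A1 A xR"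
proof -
  let ?row = "\<lambda>j. {i. (i, j) \<in> A}"
  have fin_row: "finite (?row j)" for j
    using finite_vimageI[OF fin, of "\<lambda>i. (i, j)"] by (simp add: vimage_def inj_on_def)
  define B where "B = (SIGMA j:{-1, 0, 1}. ?row j)"
  have A_eq: "A = prod.swap ` B"
  proof (intro set_eqI iffI)
    fix s
    assume "s \<in> A"
    moreover have "snd s \<in> {-1, 0, 1}" using small[of "fst s" "snd s"] \<open>s \<in> A\<close> by auto
    ultimately show "s \<in> prod.swap ` B"
      unfolding B_def by (intro image_eqI[of _ _ "(snd s, fst s)"]) auto
  qed (auto simp: B_def)
  have "step_poly A = (\<Sum>p\<in>B. monoR 0 (snd p) (fst p))"
    unfolding step_poly_def A_eq by (simp add: sum.reindex)
  also have "\<dots> = (\<Sum>j\<in>{-1, 0, 1}. \<Sum>i\<in>?row j. monoR 0 i j)"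
    unfolding B_def by (simp add: sum.Sigma fin_row split_beta)
  also have "\<dots> = (\<Sum>i\<in>?row 0. monoR 0 i 0) + (\<Sum>i\<in>?row 1. monoR 0 i 1 + monoR 0 i (-1))"
  proof -
    have "?row (-1) = ?row 1" using sym by force
    then show ?thesis by (simp add: sum.distrib)
  qed
  also have "\<dots> = A0 A xR + (yR + inverse yR) * A1 A xR"
  proof -
    have "yR * monoR 0 i 0 = monoR 0 i 1" "inverse yR * monoR 0 i 0 = monoR 0 i (-1)" for i
      by (simp_all add: yR_monoR inverse_monoR monoR_mult)
    then show ?thesis
      by (simp add: A0_def A1_def xR_powi sum_distrib_left sum.distrib distrib_right)
  qed
  finally show ?thesis .
qed

lemma Kxy_eq_step_poly:
  assumes "finite A" "\<And>i j. (i, j) \<in> A \<Longrightarrow> (i, - j) \<in> A" "\<And>i j. (i, j) \<in> A \<Longrightarrow> \<bar>j\<bar> \<le> 1"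
  shows "Kxy A = 1 - fps_X * fps_const (step_poly A)"
proof -
  have "fps_const (step_poly A) = fps_const (A0 A xR) + fps_const ((yR + inverse yR) * A1 A xR)"
    by (simp add: step_poly_eq[OF assms] fps_const_add)
  then show ?thesis unfolding Kxy_def by (simp only: diff_diff_eq distrib_left)
qed

lemma coeffR_step_poly_mult:
  "coeffR (step_poly A * r) k i j = (\<Sum>s\<in>A. coeffR r k (i - fst s) (j - snd s))"
  by (simp add: step_poly_def sum_distrib_right coeffR_sum coeffR_monoR_mult)

lemma kernel_mult_nth_Suc:
  fixes c :: "'a::comm_ring_1"
  shows "((1 - fps_X * fps_const c) * F) $ Suc m = F $ Suc m - c * F $ m"
proof -
  have "(1 - fps_X * fps_const c) * F = F - fps_X * (fps_const c * F)"
    by (simp add: algebra_simps)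
  then show ?thesis by (simp add: fps_X_mult_nth)
qed

text \<open>The kernel equation \<open>K F = F(t=0) + (terms on H)\<close>, together with the vanishing of F
  on H, both at positive order in t.\<close>

definition kernel_solution :: "R \<Rightarrow> R fps \<Rightarrow> bool" where
  "kernel_solution c F \<longleftrightarrow> (\<forall>n\<ge>1.
     suppR (((1 - fps_X * fps_const c) * F) $ n) (\<lambda>k i j. (i, j) \<in> Hline) \<and>
     (\<forall>k i j. (i, j) \<in> Hline \<longrightarrow> coeffR (F $ n) k i j = 0))"

lemma kernel_solutionI:
  assumes "(1 - fps_X * fps_const c) * F = H + fps_const r" and "suppF H (\<lambda>n k i j. (i, j) \<in> Hline)"
    and "\<And>n k i. n \<ge> 1 \<Longrightarrow> i \<le> 0 \<Longrightarrow> coeffR (F $ n) k i 0 = 0"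
  shows "kernel_solution c F"
  using assms by (auto simp: kernel_solution_def suppF_def Hline_iff)

lemma kernel_solution_diff:
  assumes "kernel_solution c F" "kernel_solution c G"
  shows "kernel_solution c (F - G)"
  using assms unfolding kernel_solution_def by (simp add: right_diff_distrib suppR_diff)

lemma kernel_solution_eq_0:
  assumes sol: "kernel_solution c F" and F0: "F $ 0 = 0"
  shows "F = 0"
proof -
  have "F $ n = 0" for n
  proof (induction n)
    case 0
    then show ?case by (rule F0)
  next
    case (Suc m)
    have "coeffR (F $ Suc m) k i j = 0" for k i j
    proof (cases "(i, j) \<in> Hline")
      case True
      then show ?thesis using sol by (simp add: kernel_solution_def)
    next
      case False
      have "((1 - fps_X * fps_const c) * F) $ Suc m = F $ Suc m"
        using Suc.IH by (simp add: kernel_mult_nth_Suc)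
      moreover have "suppR (((1 - fps_X * fps_const c) * F) $ Suc m) (\<lambda>k i j. (i, j) \<in> Hline)"
        using sol by (simp add: kernel_solution_def)
      ultimately show ?thesis using False by (simp add: suppR_coeffR)
    qed
    then show ?case by (intro coeffR_eqI) simp
  qed
  then show ?thesis by (intro fps_ext) simp
qed

lemma kernel_solution_unique:
  "kernel_solution c F \<Longrightarrow> kernel_solution c G \<Longrightarrow> F $ 0 = G $ 0 \<Longrightarrow> F = G"
  using kernel_solution_eq_0[OF kernel_solution_diff, of c F G] by simp

lemma kernel_solution_walk_gf:
  assumes fin: "finite A"
    and coeff: "\<And>n k i j. coeffR (F $ n) k i j = (if P k then real (acount A (\<sigma> k) i j n) else 0)"
  shows "kernel_solution (step_poly A) F"
  unfolding kernel_solution_def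
proof (intro allI impI conjI)
  fix n :: nat
  assume "n \<ge> 1"
  then obtain m where n: "n = Suc m" by (cases n) auto
  show "suppR (((1 - fps_X * fps_const (step_poly A)) * F) $ n) (\<lambda>k i j. (i, j) \<in> Hline)"
    unfolding suppR_def n kernel_mult_nth_Suc
    by (auto simp: coeffR_step_poly_mult coeff acount_Suc[OF fin] of_nat_sum)
  show "coeffR (F $ n) k i j = 0" if "(i, j) \<in> Hline" for k i j
    using that \<open>n \<ge> 1\<close> by (simp add: coeff acount_Hline)
qed

section \<open>Symmetry under x \<mapsto> 1/x\<close>

definition x_symmetric :: "R \<Rightarrow> bool" where
  "x_symmetric r \<longleftrightarrow> (\<forall>k i j. coeffR r k (- i) j = coeffR r k i j)"

lemma x_symmetric_sum_monoR:
  assumes "bij_betw \<sigma> E E" "\<And>e. e \<in> E \<Longrightarrow> f (\<sigma> e) = - f e"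
  shows "x_symmetric (\<Sum>e\<in>E. monoR 0 (f e) 0)"
  unfolding x_symmetric_def
proof (intro allI)
  fix k i j
  have "coeffR (\<Sum>e\<in>E. monoR 0 (f e) 0) k (- i) j = (\<Sum>e\<in>E. coeffR (monoR 0 (f (\<sigma> e)) 0) k (- i) j)"
    unfolding coeffR_sum
    using sum.reindex_bij_betw[OF assms(1), of "\<lambda>e. coeffR (monoR 0 (f e) 0) k (- i) j"] by simp
  also have "\<dots> = (\<Sum>e\<in>E. coeffR (monoR 0 (f e) 0) k i j)"
    by (intro sum.cong refl) (auto simp: assms(2) coeffR_monoR)
  finally show "coeffR (\<Sum>e\<in>E. monoR 0 (f e) 0) k (- i) j = coeffR (\<Sum>e\<in>E. monoR 0 (f e) 0) k i j"
    by (simp add: coeffR_sum)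
qed

lemma x_symmetric_row_sum:
  assumes "finite S" "\<And>i. i \<in> S \<Longrightarrow> - i \<in> S"
  shows "x_symmetric (\<Sum>i\<in>S. monoR 0 i 0)" "x_symmetric ((\<Sum>i\<in>S. monoR 0 i 0) ^ 2)"
proof -
  have "bij_betw uminus S S"
    by (rule bij_betwI[where g = uminus]) (auto simp: assms(2))
  then show "x_symmetric (\<Sum>i\<in>S. monoR 0 i 0)"
    by (rule x_symmetric_sum_monoR) simp
  have "(\<Sum>i\<in>S. monoR 0 i 0) ^ 2 = (\<Sum>e\<in>S \<times> S. monoR 0 (fst e + snd e) 0)"
    unfolding power2_eq_square sum_product sum.cartesian_product
    by (intro sum.cong) (auto simp: monoR_mult)
  moreover have "bij_betw (\<lambda>e. (- fst e, - snd e)) (S \<times> S) (S \<times> S)"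
    by (rule bij_betwI[where g = "\<lambda>e. (- fst e, - snd e)"]) (auto simp: assms(2))
  ultimately show "x_symmetric ((\<Sum>i\<in>S. monoR 0 i 0) ^ 2)"
    by (simp add: x_symmetric_sum_monoR)
qed

lemma deltax_nth:
  "deltax A $ n = (if n = 0 then 1 else if n = 1 then - (2 * A0 A xR)
     else if n = 2 then A0 A xR ^ 2 - 4 * A1 A xR ^ 2 else 0)"
proof -
  have "deltax A = 1 - fps_X * fps_const (2 * A0 A xR) + fps_X ^ 2 * fps_const (A0 A xR ^ 2 - 4 * A1 A xR ^ 2)"
    unfolding deltax_def by (simp add: power2_eq_square algebra_simps numeral_fps_const)
  then show ?thesis by (simp add: fps_X_power_mult_nth fps_X_mult_nth)
qed

lemma x_symmetric_deltax:
  assumes fin: "finite A" and sym: "\<And>i j. (i, j) \<in> A \<Longrightarrow> (i, - j) \<in> A"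
    and rev: "\<And>i j. (i, j) \<in> A \<Longrightarrow> (- i, - j) \<in> A"
  shows "x_symmetric (deltax A $ n)"
proof -
  let ?S0 = "{i. (i, 0) \<in> A}" and ?S1 = "{i. (i, 1) \<in> A}"
  have "finite ?S0" "finite ?S1"
    using finite_vimageI[OF fin, of "\<lambda>i. (i, 0::int)"] finite_vimageI[OF fin, of "\<lambda>i. (i, 1::int)"]
    by (simp_all add: vimage_def inj_on_def)
  moreover have "- i \<in> ?S0" if "i \<in> ?S0" for i using rev that by force
  moreover have "- i \<in> ?S1" if "i \<in> ?S1" for i using rev[of i 1] sym[of "- i" "- 1"] that by simp
  ultimately have "x_symmetric (A0 A xR)" "x_symmetric (A0 A xR ^ 2)"
    "x_symmetric (A1 A xR)" "x_symmetric (A1 A xR ^ 2)"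
    unfolding A0_def A1_def xR_powi by (blast intro: x_symmetric_row_sum)+
  then show ?thesis
    unfolding deltax_nth by (simp add: x_symmetric_def coeffR_1)
qed

lemma coeffR_pev_xR_mult_inverse_xR:
  "coeffR (pev p xR * pev q (inverse xR)) k i j =
     (\<Sum>e\<in>{e\<in>{..degree p} \<times> {..degree q}. 0 = k \<and> int (fst e) - int (snd e) = i \<and> 0 = j}.
        coeff p (fst e) * coeff q (snd e))"
proof -
  have "pev p xR * pev q (inverse xR) = (\<Sum>e\<in>{..degree p} \<times> {..degree q}.
      cR (coeff p (fst e) * coeff q (snd e)) * monoR 0 (int (fst e) - int (snd e)) 0)"
    unfolding pev_def sum_product sum.cartesian_product
    by (intro sum.cong) (simp_all add: cR_mult xR_power inverse_xR_power monoR_mult algebra_simps split_beta)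
  then show ?thesis by (simp add: coeffR_sum_monoR)
qed

lemma coeffR_pev_reflect:
  "coeffR (pev p xR * pev q (inverse xR)) k (- i) j = coeffR (pev q xR * pev p (inverse xR)) k i j"
proof -
  let ?S = "\<lambda>p q i. {e\<in>{..degree p} \<times> {..degree q}. 0 = k \<and> int (fst e) - int (snd e) = i \<and> 0 = j}"
  have swap: "prod.swap ` ?S q p i = ?S p q (- i)" by force
  have "coeffR (pev p xR * pev q (inverse xR)) k (- i) j =
      (\<Sum>e\<in>prod.swap ` ?S q p i. coeff p (fst e) * coeff q (snd e))"
    unfolding swap by (rule coeffR_pev_xR_mult_inverse_xR)
  also have "\<dots> = (\<Sum>e\<in>?S q p i. coeff q (fst e) * coeff p (snd e))"
    by (subst sum.reindex) (auto intro: inj_onI simp: mult.commute)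
  also have "\<dots> = coeffR (pev q xR * pev p (inverse xR)) k i j"
    by (rule coeffR_pev_xR_mult_inverse_xR[symmetric])
  finally show ?thesis .
qed

lemma coeffR_fev_reflect:
  "coeffR ((fev P xR * fev Q (inverse xR)) $ n) k (- i) j =
     coeffR ((fev Q xR * fev P (inverse xR)) $ n) k i j"
proof -
  have "coeffR ((fev P xR * fev Q (inverse xR)) $ n) k (- i) j =
      (\<Sum>m=0..n. coeffR (pev (P $ m) xR * pev (Q $ (n - m)) (inverse xR)) k (- i) j)"
    by (simp add: fps_mult_nth coeffR_sum)
  also have "\<dots> = (\<Sum>m=0..n. coeffR (pev (P $ m) (inverse xR) * pev (Q $ (n - m)) xR) k i j)"
    by (intro sum.cong refl) (simp only: coeffR_pev_reflect mult.commute)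
  also have "\<dots> = coeffR ((fev Q xR * fev P (inverse xR)) $ n) k i j"
    by (simp add: fps_mult_nth coeffR_sum mult.commute[of "fev Q xR"])
  finally show ?thesis .
qed

lemma canon_fact_poly0:
  assumes "canon_fact A D Del Delb"
  shows "fps_map (\<lambda>p. poly p 0) Del = 1" "fps_map (\<lambda>p. poly p 0) Delb = 1"
  using assms by (auto simp: canon_fact_def fps_eq_iff)

lemma canon_fact_reflect:
  assumes fin: "finite A" and sym: "\<And>i j. (i, j) \<in> A \<Longrightarrow> (i, - j) \<in> A"
    and rev: "\<And>i j. (i, j) \<in> A \<Longrightarrow> (- i, - j) \<in> A"
    and cf: "canon_fact A D Del Delb"
  shows "fev Delb xR * fev Del (inverse xR) = fev Del xR * fev Delb (inverse xR)"
  \<comment> \<open>\<open>\<delta>\<close> is invariant under \<open>x \<mapsto> 1/x\<close>, so reflecting its factorisation gives another one.\<close>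
proof -
  define Dp where "Dp = fps_map (\<lambda>c. [:c:]) D"
  have lift: "liftR D = fev Dp X" for X unfolding Dp_def by (rule liftR_eq_fev)
  have delta: "deltax A = fev (Dp * Del) xR * fev Delb (inverse xR)"
    using cf unfolding canon_fact_def by (simp add: lift[of xR] fev_mult)
  have "coeffR ((fev Delb xR * fev (Dp * Del) (inverse xR)) $ n) k i j = coeffR (deltax A $ n) k i j"
    for n k i j
    using coeffR_fev_reflect[of "Dp * Del" Delb n k i j] x_symmetric_deltax[OF fin sym rev, of n]
    unfolding delta x_symmetric_def by simp
  then have "fev Delb xR * fev (Dp * Del) (inverse xR) = deltax A"
    by (intro fps_ext coeffR_eqI) simp
  then have "liftR D * (fev Delb xR * fev Del (inverse xR)) = liftR D * (fev Del xR * fev Delb (inverse xR))"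
    unfolding delta fev_mult lift[symmetric] by (simp only: ac_simps)
  moreover have "liftR D \<noteq> 0"
  proof
    assume "liftR D = 0"
    then have "liftR D $ 0 = 0" by simp
    with cf show False by (simp add: canon_fact_def)
  qed
  ultimately show ?thesis by simp
qed

lemma fev_reflection_invariant_eq_1:
  assumes norm: "fps_map (\<lambda>p. poly p 0) U = 1" and refl: "fev U xR = fev U (inverse xR)"
  shows "U = 1"
proof (intro fps_ext poly_eqI)
  fix n m
  show "coeff (U $ n) m = coeff (1 $ n) m"
  proof (cases m)
    case 0
    then show ?thesis using fps_eq_iff[THEN iffD1, OF norm, THEN spec, of n] by (simp add: poly_0_coeff_0)
  next
    case (Suc m')
    have "coeff (U $ n) m = coeffR (pev (U $ n) xR) 0 (int m) 0" by (simp add: coeffR_pev_xR)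
    also have "\<dots> = coeffR (pev (U $ n) (inverse xR)) 0 (int m) 0" by (metis refl fev_nth)
    also have "\<dots> = 0" using Suc by (simp add: coeffR_pev_inverse_xR)
    finally show ?thesis using Suc by simp
  qed
qed

lemma Delb_eq_Del:
  assumes fin: "finite A" and sym: "\<And>i j. (i, j) \<in> A \<Longrightarrow> (i, - j) \<in> A"
    and rev: "\<And>i j. (i, j) \<in> A \<Longrightarrow> (- i, - j) \<in> A"
    and cf: "canon_fact A D Del Delb"
  shows "Delb = Del"
  \<comment> \<open>\<open>\<Delta>/\<Delta>\<close>-bar is invariant under \<open>x \<mapsto> 1/x\<close> and normalised at \<open>x = 0\<close>, hence equal to 1.\<close>
proof -
  have Delb0: "Delb $ 0 = 1" using cf by (simp add: canon_fact_def)
  define U where "U = Del * fps_right_inverse Delb 1"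
  have fevU: "fev U X = fev Del X * inverse (fev Delb X)" for X
    unfolding U_def fev_mult fev_right_inverse[OF Delb0] ..
  have inv: "fev Delb X * inverse (fev Delb X) = 1" for X
    using Delb0 by (intro inverse_mult_eq_1') simp
  have "fev U xR = fev Del xR * fev Delb (inverse xR) * inverse (fev Delb xR) * inverse (fev Delb (inverse xR))"
    unfolding fevU using inv[of "inverse xR"] by (simp add: ac_simps)
  also have "\<dots> = fev Delb xR * fev Del (inverse xR) * inverse (fev Delb xR) * inverse (fev Delb (inverse xR))"
    by (simp only: canon_fact_reflect[OF fin sym rev cf])
  also have "\<dots> = fev U (inverse xR)"
    unfolding fevU using inv[of xR] by (simp add: ac_simps)
  finally have "U = 1"
    using fev_reflection_invariant_eq_1 fps_map_poly0_mult[of Del "fps_right_inverse Delb 1"]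
      fps_map_poly0_right_inverse[OF Delb0 canon_fact_poly0(2)[OF cf]] canon_fact_poly0(1)[OF cf]
    unfolding U_def by simp
  then have "Del * (fps_right_inverse Delb 1 * Delb) = Delb" by (simp add: U_def mult.assoc[symmetric])
  then show ?thesis using fps_right_inverse_1(1)[OF Delb0] by (simp add: mult.commute)
qed

section \<open>The constant term in y of 1/K\<close>

text \<open>With \<open>K = L - W (y + 1/y)\<close> and Y the root of \<open>W Y\<^sup>2 - L Y + W = 0\<close> without constant
  term, \<open>1/K = (1 + \<Sum>\<^sub>j\<^sub>>\<^sub>0 (y\<^sup>j + y\<^sup>-\<^sup>j) Y\<^sup>j) / \<surd>(L\<^sup>2 - 4 W\<^sup>2)\<close>.  The next lemma is the
  truncated form of this identity, \<open>E j\<close> standing for \<open>y\<^sup>j + y\<^sup>-\<^sup>j\<close>.\<close>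

lemma kernel_partial_inverse:
  fixes L W Y V :: "'a::comm_ring_1" and E :: "nat \<Rightarrow> 'a"
  assumes quad: "L * Y = W * Y ^ 2 + W" and V: "V * (L - 2 * W * Y) = 1"
    and E0: "E 0 = 2" and Erec: "\<And>j. E 1 * E (Suc j) = E (Suc (Suc j)) + E j"
  shows "(L - W * E 1) * (V * (1 + (\<Sum>j\<in>{1..N}. E j * Y ^ j))) =
    1 + V * W * (Y ^ (N + 1) * E N - Y ^ N * E (Suc N))"
proof (induction N)
  case 0
  have "L * V = 1 + 2 * V * W * Y" using V by (simp add: algebra_simps)
  then show ?case using E0 by (simp add: algebra_simps)
next
  case (Suc N)
  have "(L - W * E 1) * (V * (1 + (\<Sum>j\<in>{1..Suc N}. E j * Y ^ j))) =
      (L - W * E 1) * (V * (1 + (\<Sum>j\<in>{1..N}. E j * Y ^ j))) + V * Y ^ N * E (Suc N) * (L * Y - W * Y * E 1)"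
    by (simp add: algebra_simps)
  also have "\<dots> = 1 + V * W * (Y ^ (N + 1) * E N - Y ^ N * E (Suc N)) +
      V * Y ^ N * E (Suc N) * (W * Y ^ 2 + W - W * Y * E 1)"
    unfolding Suc.IH quad ..
  also have "\<dots> = 1 + V * W * Y ^ (N + 1) * (E N + E (Suc (Suc N)) - E 1 * E (Suc N)) +
      V * W * (Y ^ (N + 2) * E (Suc N) - Y ^ (N + 1) * E (Suc (Suc N)))"
    by (simp add: algebra_simps power2_eq_square)
  also have "E N + E (Suc (Suc N)) - E 1 * E (Suc N) = 0" using Erec[of N] by simp
  finally show ?case by (simp add: algebra_simps)
qed

lemma fps_nth_eq_if_X_power_dvd: "F = G + fps_X ^ Suc n * H \<Longrightarrow> F $ n = G $ n"
  by (simp add: fps_X_power_mult_nth del: power_Suc)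

lemma inverse_kernel_truncated:
  fixes a b :: "'a::field" and G Y V :: "'a fps" and E :: "nat \<Rightarrow> 'a"
  defines "L \<equiv> 1 - fps_X * fps_const a" and "W \<equiv> fps_X * fps_const b"
  assumes quad: "L * Y = W * Y ^ 2 + W" and Y0: "Y $ 0 = 0" and V: "V * (L - 2 * W * Y) = 1"
    and E0: "E 0 = 2" and Erec: "\<And>j. E 1 * E (Suc j) = E (Suc (Suc j)) + E j"
  shows "(G * inverse (L - W * fps_const (E 1))) $ n =
    (G * V * (1 + (\<Sum>j\<in>{1..n}. fps_const (E j) * Y ^ j))) $ n"
proof -
  define K where "K = L - W * fps_const (E 1)"
  define P where "P = V * (1 + (\<Sum>j\<in>{1..n}. fps_const (E j) * Y ^ j))"
  define Y1 where "Y1 = fps_shift 1 Y"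
  have Y: "Y = fps_X * Y1"
    unfolding Y1_def using Y0 by (intro fps_ext) (simp add: fps_X_mult_nth)
  have "K * P = 1 + V * W * (Y ^ (n + 1) * fps_const (E n) - Y ^ n * fps_const (E (Suc n)))"
    unfolding K_def P_def
    by (rule kernel_partial_inverse[OF quad V])
      (simp_all add: E0 Erec[symmetric] mult.commute numeral_fps_const flip: fps_const_add fps_const_mult)
  also have "\<dots> = 1 + fps_X ^ Suc n *
      (V * fps_const b * Y1 ^ n * (Y * fps_const (E n) - fps_const (E (Suc n))))"
  proof -
    have "Y ^ n = fps_X ^ n * Y1 ^ n" by (subst Y) (simp add: power_mult_distrib)
    then show ?thesis unfolding W_def by (simp add: algebra_simps)
  qed
  finally have KP: "K * P = 1 + fps_X ^ Suc n *
      (V * fps_const b * Y1 ^ n * (Y * fps_const (E n) - fps_const (E (Suc n))))" .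
  have "inverse K * K = 1"
    unfolding K_def L_def W_def by (intro inverse_mult_eq_1) simp
  then have "G * P = G * inverse K * (K * P)" by (simp add: ac_simps)
  also have "\<dots> = G * inverse K + fps_X ^ Suc n *
      (G * inverse K * (V * fps_const b * Y1 ^ n * (Y * fps_const (E n) - fps_const (E (Suc n)))))"
    unfolding KP by (simp add: algebra_simps)
  finally have "(G * P) $ n = (G * inverse K) $ n" by (rule fps_nth_eq_if_X_power_dvd)
  then show ?thesis by (simp add: K_def P_def mult.assoc)
qed

lemma kernel_small_root:
  fixes a b :: "'a::field_char_0" and s :: "'a fps"
  defines "L \<equiv> 1 - fps_X * fps_const a" and "W \<equiv> fps_X * fps_const b"
  assumes b: "b \<noteq> 0" and s2: "s ^ 2 = L ^ 2 - 4 * W ^ 2" and s0: "s $ 0 = 1"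
  obtains Y where "Y $ 0 = 0" "s = L - 2 * W * Y" "L * Y = W * Y ^ 2 + W"
proof -
  define T where "T = L - s"
  have "(s ^ 2) $ 1 = 2 * s $ 1" using s0 by (simp add: power2_eq_square fps_mult_nth)
  moreover have "(L ^ 2 - 4 * W ^ 2) $ 1 = - 2 * a"
    by (simp add: L_def W_def power2_eq_square fps_mult_nth numeral_fps_const)
  ultimately have "s $ 1 = - a" using s2 by simp
  then have T0: "T $ 0 = 0" and T1: "T $ 1 = 0"
    using s0 by (simp_all add: T_def L_def fps_X_mult_nth)
  define Y where "Y = fps_shift 1 T * fps_const (inverse (2 * b))"
  have "2 * W * Y = fps_X * fps_shift 1 T * fps_const (2 * b * inverse (2 * b))"
    unfolding W_def Y_def by (simp add: numeral_fps_const algebra_simps)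
  also have "\<dots> = T"
    using b T0 by (intro fps_ext) (simp add: fps_X_mult_nth)
  finally have sY: "s = L - 2 * W * Y" by (simp add: T_def)
  have "W \<noteq> 0"
  proof
    assume "W = 0"
    then have "W $ 1 = 0" by simp
    with b show False by (simp add: W_def)
  qed
  then have "4 * W \<noteq> 0" by simp
  moreover have "(4 * W) * (W * Y ^ 2 - L * Y + W) = 0"
    using s2 unfolding sY by (simp add: algebra_simps power2_eq_square)
  ultimately have "W * Y ^ 2 - L * Y + W = 0" by simp
  then have "L * Y = W * Y ^ 2 + W" by (simp add: algebra_simps)
  moreover have "Y $ 0 = 0" using T1 by (simp add: Y_def)
  ultimately show ?thesis using sY that by blast
qed

lemma y_free_kernel_root:
  fixes a b :: R and Y :: "R fps"
  assumes a: "y_free a" and b: "y_free b" and Y0: "Y $ 0 = 0"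
    and quad: "(1 - fps_X * fps_const a) * Y = fps_X * fps_const b * Y ^ 2 + fps_X * fps_const b"
  shows "y_free (Y $ n)"
proof (induction n rule: less_induct)
  case (less n)
  show ?case
  proof (cases n)
    case 0
    then show ?thesis using Y0 by (simp add: y_free_def)
  next
    case (Suc m)
    have "Y = fps_X * (fps_const a * Y + fps_const b * Y ^ 2 + fps_const b)"
      using quad by (simp add: algebra_simps)
    then have "Y $ Suc m = (fps_X * (fps_const a * Y + fps_const b * Y ^ 2 + fps_const b)) $ Suc m"
      by (rule arg_cong)
    then have "Y $ n = a * Y $ m + b * (Y * Y) $ m + (if m = 0 then b else 0)"
      unfolding Suc by (simp add: fps_X_mult_nth power2_eq_square Y0)
    moreover have "y_free ((Y * Y) $ m)" "y_free (Y $ m)"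
      using less Suc by (auto intro: y_free_fps_mult_nth)
    ultimately show ?thesis using a b by (simp add: y_free_add y_free_mult y_free_0)
  qed
qed

definition ysum :: "nat \<Rightarrow> R" where
  "ysum j = monoR 0 0 (int j) + monoR 0 0 (- int j)"

lemma ysum_0: "ysum 0 = 2"
  and ysum_1: "ysum 1 = yR + inverse yR"
  by (simp_all add: ysum_def yR_monoR inverse_monoR)

lemma ysum_rec: "ysum 1 * ysum (Suc j) = ysum (Suc (Suc j)) + ysum j"
  by (rule coeffR_eqI) (auto simp: ysum_def distrib_left distrib_right coeffR_monoR_mult coeffR_monoR)

lemma coeffR_ysum_mult: "coeffR (ysum j * r) k i l = coeffR r k i (l - int j) + coeffR r k i (l + int j)"
  by (simp add: ysum_def distrib_right coeffR_monoR_mult)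

lemma A1_xR_nonzero:
  assumes fin: "finite A" and A1_ne: "\<exists>i. (i, 1) \<in> A"
  shows "A1 A xR \<noteq> 0"
proof
  assume zero: "A1 A xR = 0"
  obtain i0 where i0: "(i0, 1) \<in> A" using A1_ne by auto
  have "finite {i. (i, 1) \<in> A}"
    using finite_vimageI[OF fin, of "\<lambda>i. (i, 1::int)"] by (simp add: vimage_def inj_on_def)
  then have "coeffR (A1 A xR) 0 i0 0 = 1"
    using i0 by (simp add: A1_def xR_powi coeffR_sum coeffR_monoR)
  with zero show False by simp
qed

lemma y_free_A0: "y_free (A0 A xR)" and y_free_A1: "y_free (A1 A xR)"
  unfolding A0_def A1_def xR_powi y_free_def by (auto intro!: suppR_sum suppR_monoR)

lemma inverse_Kxy_expansion:
  fixes s :: "R fps"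
  assumes fin: "finite A" and A1_ne: "\<exists>i. (i, 1) \<in> A"
    and s2: "s ^ 2 = deltax A" and s0: "s $ 0 = 1"
  obtains Y where "suppF Y (\<lambda>n k i j. j = 0)"
    and "(G * inverse (Kxy A)) $ n = (G * inverse s * (1 + (\<Sum>j\<in>{1..n}. fps_const (ysum j) * Y ^ j))) $ n"
proof -
  define L where "L = 1 - fps_X * fps_const (A0 A xR)"
  define W where "W = fps_X * fps_const (A1 A xR)"
  have "s ^ 2 = L ^ 2 - 4 * W ^ 2"
    unfolding s2 deltax_def L_def W_def by (simp add: power_mult_distrib fps_const_power)
  with A1_xR_nonzero[OF fin A1_ne] obtain Y
    where Y0: "Y $ 0 = 0" and sY: "s = L - 2 * W * Y" and quad: "L * Y = W * Y ^ 2 + W"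
    using s0 unfolding L_def W_def by (rule kernel_small_root)
  have "suppF Y (\<lambda>n k i j. j = 0)"
    unfolding suppF_y_free_iff
    using y_free_kernel_root[OF y_free_A0 y_free_A1 Y0 quad[unfolded L_def W_def]] by blast
  moreover have "(G * inverse (Kxy A)) $ n =
      (G * inverse s * (1 + (\<Sum>j\<in>{1..n}. fps_const (ysum j) * Y ^ j))) $ n"
  proof -
    have "Kxy A = L - W * fps_const (ysum 1)"
      unfolding Kxy_def L_def W_def ysum_1 by (simp add: algebra_simps)
    moreover have "inverse s * (L - 2 * W * Y) = 1"
      unfolding sY[symmetric] using s0 by (intro inverse_mult_eq_1) simp
    ultimately show ?thesis
      using Y0 quad unfolding L_def W_def
      by (simp only:) (intro inverse_kernel_truncated; simp add: ysum_0 ysum_rec[unfolded One_nat_def])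
  qed
  ultimately show ?thesis by (rule that)
qed

lemma coeffR_y0_inverse_Kxy:
  fixes G s :: "R fps"
  assumes fin: "finite A" and A1_ne: "\<exists>i. (i, 1) \<in> A"
    and s2: "s ^ 2 = deltax A" and s0: "s $ 0 = 1"
    and yV: "suppF (inverse s) (\<lambda>n k i j. j = 0)" and yG: "suppF G (\<lambda>n k i j. j = 0)"
  shows "coeffR ((G * inverse (Kxy A)) $ n) k i 0 = coeffR ((G * inverse s) $ n) k i 0"
proof -
  obtain Y where yY: "suppF Y (\<lambda>n k i j. j = 0)"
    and expansion: "(G * inverse (Kxy A)) $ n =
      (G * inverse s * (1 + (\<Sum>j\<in>{1..n}. fps_const (ysum j) * Y ^ j))) $ n"
    by (rule inverse_Kxy_expansion[OF fin A1_ne s2 s0])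
  have "(G * inverse (Kxy A)) $ n =
      (G * inverse s) $ n + (\<Sum>j\<in>{1..n}. (fps_const (ysum j) * (G * inverse s * Y ^ j)) $ n)"
    unfolding expansion by (simp add: distrib_left sum_distrib_left fps_sum_nth mult_ac)
  also have "\<dots> = (G * inverse s) $ n + (\<Sum>j\<in>{1..n}. ysum j * (G * inverse s * Y ^ j) $ n)"
    by simp
  finally have eq: "(G * inverse (Kxy A)) $ n = \<dots>" .
  have "coeffR (ysum j * (G * inverse s * Y ^ j) $ n) k i 0 = 0" if "j \<in> {1..n}" for j
  proof -
    have "suppF (G * inverse s) (\<lambda>n k i j. j = 0)" by (rule suppF_mult[OF yG yV]) simp
    then have "suppF (G * inverse s * Y ^ j) (\<lambda>n k i j. j = 0)"
      by (rule suppF_mult[OF _ suppF_y_free_power[OF yY]]) simp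
    with that show ?thesis by (simp add: coeffR_ysum_mult suppF_coeffR)
  qed
  then show ?thesis unfolding eq by (simp add: coeffR_sum)
qed

definition zx_series :: R where
  "zx_series = zR * xR / (1 - zR * xR)"

lemma zx_monoR: "zR * xR = monoR 1 1 0"
  by (simp add: monoR_def)

lemma one_minus_zx_nonzero: "1 - zR * xR \<noteq> 0"
proof
  assume "1 - zR * xR = 0"
  then have "coeffR (1 - zR * xR) 0 0 0 = 0" by simp
  then show False by (simp add: zx_monoR coeffR_1 coeffR_monoR)
qed

lemma coeffR_zx_series: "coeffR zx_series k i j = (if 1 \<le> k \<and> i = k \<and> j = 0 then 1 else 0)"
proof -
  define Q :: R where "Q = fps_to_fls (Abs_fps (\<lambda>k. if k = 0 then 0 else xM ^ k))"
  have coeffQ: "coeffR Q k i j = (if 1 \<le> k \<and> i = k \<and> j = 0 then 1 else 0)" for k i j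
    by (auto simp: Q_def coeffR_def xM_def)
  have "Q * (1 - zR * xR) = zR * xR"
  proof (rule coeffR_eqI)
    fix k i j
    have "Q * (1 - zR * xR) = Q - monoR 1 1 0 * Q" unfolding zx_monoR by (simp add: algebra_simps)
    then show "coeffR (Q * (1 - zR * xR)) k i j = coeffR (zR * xR) k i j"
      by (simp add: zx_monoR coeffR_monoR_mult coeffR_monoR coeffQ)
  qed
  then have "zx_series = Q"
    unfolding zx_series_def using one_minus_zx_nonzero by (metis nonzero_mult_div_cancel_right)
  with coeffQ show ?thesis by simp
qed

lemma zx_series_telescope: "zx_series * (inverse xR ^ l - zR ^ l) = (\<Sum>t<l. monoR (int l - int t) (- int t) 0)"
proof -
  have "inverse xR - zR = inverse xR * (1 - zR * xR)"
    by (simp add: xR_monoR zR_monoR inverse_monoR right_diff_distrib monoR_mult)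
  then have "zx_series * (inverse xR - zR) = zR"
    unfolding zx_series_def using one_minus_zx_nonzero by (simp add: xR_monoR zR_monoR inverse_monoR monoR_mult)
  then have "zx_series * (inverse xR ^ l - zR ^ l) = (\<Sum>t<l. zR * (zR ^ (l - Suc t) * inverse xR ^ t))"
    by (simp add: power_diff_sumr2 sum_distrib_left mult.assoc[symmetric])
  also have "\<dots> = (\<Sum>t<l. monoR (int l - int t) (- int t) 0)"
  proof (intro sum.cong refl)
    fix t
    assume "t \<in> {..<l}"
    have "zR * (zR ^ (l - Suc t) * inverse xR ^ t) = zR ^ Suc (l - Suc t) * inverse xR ^ t"
      by (simp add: mult.assoc)
    also have "\<dots> = monoR (int (Suc (l - Suc t))) (- int t) 0"
      by (simp only: zR_power inverse_xR_power monoR_mult) simp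
    also have "int (Suc (l - Suc t)) = int l - int t" using \<open>t \<in> {..<l}\<close> by auto
    finally show "zR * (zR ^ (l - Suc t) * inverse xR ^ t) = monoR (int l - int t) (- int t) 0" .
  qed
  finally show ?thesis .
qed

lemma suppF_zx_series_mult_fev_diff:
  "suppF (fps_const zx_series * (fev P (inverse xR) - fev P zR)) (\<lambda>n k i j. (i, j) \<in> Hline)"
  unfolding suppF_def
proof
  fix n
  have "(fps_const zx_series * (fev P (inverse xR) - fev P zR)) $ n =
      (\<Sum>l\<le>degree (P $ n). cR (coeff (P $ n) l) * (zx_series * (inverse xR ^ l - zR ^ l)))"
    by (simp add: pev_def sum_subtractf right_diff_distrib sum_distrib_left mult.left_commute)
  also have "\<dots> = (\<Sum>l\<le>degree (P $ n). cR (coeff (P $ n) l) * (\<Sum>t<l. monoR (int l - int t) (- int t) 0))"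
    by (simp only: zx_series_telescope)
  finally show "suppR ((fps_const zx_series * (fev P (inverse xR) - fev P zR)) $ n) (\<lambda>k i j. (i, j) \<in> Hline)"
    by (simp add: Hline_iff suppR_sum suppR_cR_mult suppR_monoR)
qed

locale small_step_model =
  fixes A :: "(int \<times> int) set" and D :: "real fps" and Del Delb :: "real poly fps"
  assumes fin: "finite A"
    and sym: "\<And>i j. (i, j) \<in> A \<Longrightarrow> (i, - j) \<in> A"
    and small: "\<And>i j. (i, j) \<in> A \<Longrightarrow> \<bar>j\<bar> \<le> 1"
    and A1_ne: "\<exists>i. (i, 1) \<in> A"
    and rev: "\<And>i j. (i, j) \<in> A \<Longrightarrow> (- i, - j) \<in> A"
    and cf: "canon_fact A D Del Delb"
begin

definition sqrt_Del :: "real poly fps" where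
  "sqrt_Del = fps_sqrt_binomial (\<lambda>c. [:c:]) Del"

definition inv_sqrt_Del :: "real poly fps" where
  "inv_sqrt_Del = fps_right_inverse sqrt_Del 1"

definition sqrt_D :: "real fps" where
  "sqrt_D = fps_sqrt_binomial id D"

definition sqrt_delta :: "R fps" where
  "sqrt_delta = liftR sqrt_D * fev sqrt_Del xR * fev sqrt_Del (inverse xR)"

lemma Del_nth_0: "Del $ 0 = 1" and D_nth_0: "D $ 0 = 1"
  using cf by (simp_all add: canon_fact_def)

lemma sqrt_Del_power2: "sqrt_Del ^ 2 = Del"
  and sqrt_Del_nth_0: "sqrt_Del $ 0 = 1"
  unfolding sqrt_Del_def using Del_nth_0
  by (simp_all add: fps_sqrt_binomial_power2 fps_sqrt_binomial_nth_0)

lemma sqrt_D_power2: "sqrt_D ^ 2 = D"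
  and sqrt_D_nth_0: "sqrt_D $ 0 = 1"
  unfolding sqrt_D_def using D_nth_0
  by (simp_all add: fps_sqrt_binomial_power2 fps_sqrt_binomial_nth_0)

lemma fev_sqrt_Del_mult_inv: "fev sqrt_Del X * fev inv_sqrt_Del X = 1"
  unfolding inv_sqrt_Del_def
  by (metis fev_mult fev_1 fps_right_inverse_1(1) sqrt_Del_nth_0)

lemma inv_sqrt_Del_nth_0: "inv_sqrt_Del $ 0 = 1"
  unfolding inv_sqrt_Del_def by (rule fps_right_inverse_1(2)[OF sqrt_Del_nth_0])

lemma inv_sqrt_Del_poly0: "fps_map (\<lambda>p. poly p 0) inv_sqrt_Del = 1"
  unfolding inv_sqrt_Del_def sqrt_Del_def
  by (intro fps_map_poly0_right_inverse fps_map_poly0_sqrt_binomial)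
    (simp_all add: Del_nth_0 canon_fact_poly0[OF cf] fps_sqrt_binomial_nth_0)

lemma liftR_sqrt_D_mult_inverse: "liftR sqrt_D * liftR (inverse sqrt_D) = 1"
  by (metis liftR_1 liftR_mult inverse_mult_eq_1' one_neq_zero sqrt_D_nth_0)

lemma sqrt_delta_power2: "sqrt_delta ^ 2 = deltax A"
proof -
  have "sqrt_delta ^ 2 = liftR sqrt_D ^ 2 * fev sqrt_Del xR ^ 2 * fev sqrt_Del (inverse xR) ^ 2"
    unfolding sqrt_delta_def by (simp only: power_mult_distrib)
  also have "\<dots> = liftR (sqrt_D ^ 2) * fev (sqrt_Del ^ 2) xR * fev (sqrt_Del ^ 2) (inverse xR)"
    by (simp add: fev_mult liftR_mult power2_eq_square)
  also have "\<dots> = deltax A"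
    using cf Delb_eq_Del[OF fin sym rev cf]
    by (simp add: sqrt_D_power2 sqrt_Del_power2 canon_fact_def)
  finally show ?thesis .
qed

lemma sqrt_delta_nth_0: "sqrt_delta $ 0 = 1"
  by (simp add: sqrt_delta_def sqrt_D_nth_0 sqrt_Del_nth_0)

lemma inverse_sqrt_delta:
  "inverse sqrt_delta = liftR (inverse sqrt_D) * fev inv_sqrt_Del xR * fev inv_sqrt_Del (inverse xR)"
proof (rule fps_inverse_unique)
  have "sqrt_delta * (liftR (inverse sqrt_D) * fev inv_sqrt_Del xR * fev inv_sqrt_Del (inverse xR)) =
      (liftR sqrt_D * liftR (inverse sqrt_D)) * (fev sqrt_Del xR * fev inv_sqrt_Del xR) *
      (fev sqrt_Del (inverse xR) * fev inv_sqrt_Del (inverse xR))"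
    unfolding sqrt_delta_def by (simp only: ac_simps)
  then show "sqrt_delta * (liftR (inverse sqrt_D) * fev inv_sqrt_Del xR * fev inv_sqrt_Del (inverse xR)) = 1"
    by (simp add: liftR_sqrt_D_mult_inverse fev_sqrt_Del_mult_inv)
qed

lemma suppF_inverse_sqrt_delta: "suppF (inverse sqrt_delta) (\<lambda>n k i j. j = 0)"
  unfolding inverse_sqrt_delta
  by (rule suppF_mult[OF suppF_mult[OF suppF_liftR suppF_fev_xR] suppF_fev_inverse_xR]) auto

lemma Kxy_eq: "Kxy A = 1 - fps_X * fps_const (step_poly A)"
  by (rule Kxy_eq_step_poly[OF fin sym small])

lemma Kxy_mult_inverse: "Kxy A * inverse (Kxy A) = 1"
  by (intro inverse_mult_eq_1') (simp add: Kxy_eq)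

lemma Kxy_mult_cancel: "Kxy A * (F * inverse (Kxy A)) = F"
  by (metis Kxy_mult_inverse mult.left_commute mult.right_neutral)

lemma coeffR_y0_inverse_Kxy_sqrt_delta:
  "suppF G (\<lambda>n k i j. j = 0) \<Longrightarrow>
    coeffR ((G * inverse (Kxy A)) $ n) k i 0 = coeffR ((G * inverse sqrt_delta) $ n) k i 0"
  by (rule coeffR_y0_inverse_Kxy[OF fin A1_ne sqrt_delta_power2 sqrt_delta_nth_0 suppF_inverse_sqrt_delta])

lemma inverse_liftR_sqrt_D: "inverse (liftR sqrt_D) = liftR (inverse sqrt_D)"
  by (rule fps_inverse_unique[OF liftR_sqrt_D_mult_inverse])

lemma sqrt_delta_cancel: "liftR sqrt_D * fev sqrt_Del (inverse xR) * inverse sqrt_delta = fev inv_sqrt_Del xR"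
proof -
  have "liftR sqrt_D * fev sqrt_Del (inverse xR) * inverse sqrt_delta =
      (liftR sqrt_D * liftR (inverse sqrt_D)) * (fev sqrt_Del (inverse xR) * fev inv_sqrt_Del (inverse xR)) *
      fev inv_sqrt_Del xR"
    unfolding inverse_sqrt_delta by (simp only: ac_simps)
  then show ?thesis by (simp add: liftR_sqrt_D_mult_inverse fev_sqrt_Del_mult_inv)
qed

lemma Sk0_nth_0: "Sk A 0 $ 0 = 1"
  by (rule coeffR_eqI) (simp add: coeffR_Sk fin acount_0 coeffR_1)

lemma Splus_nth_0: "Splus A $ 0 = zx_series"
  by (rule coeffR_eqI) (auto simp: coeffR_Splus fin acount_0 coeffR_zx_series)

definition S_closed_form :: "R fps" where
  "S_closed_form = liftR sqrt_D * fev sqrt_Del (inverse xR) * inverse (Kxy A)"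

definition Splus_closed_form :: "R fps" where
  "Splus_closed_form =
     fps_const zx_series * inverse (Kxy A) * (fev sqrt_Del (inverse xR) * fev inv_sqrt_Del zR)"

lemma coeffR_y0_S_closed_form: "coeffR (S_closed_form $ n) k i 0 = coeffR (fev inv_sqrt_Del xR $ n) k i 0"
proof -
  have "suppF (liftR sqrt_D * fev sqrt_Del (inverse xR)) (\<lambda>n k i j. j = 0)"
    by (rule suppF_mult[OF suppF_liftR suppF_fev_inverse_xR]) auto
  then show ?thesis
    by (simp add: S_closed_form_def coeffR_y0_inverse_Kxy_sqrt_delta sqrt_delta_cancel)
qed

lemma kernel_solution_S_closed_form: "kernel_solution (step_poly A) S_closed_form"
proof (rule kernel_solutionI)
  show "(1 - fps_X * fps_const (step_poly A)) * S_closed_form =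
      liftR sqrt_D * fev sqrt_Del (inverse xR) + fps_const 0"
    by (simp add: S_closed_form_def Kxy_mult_cancel flip: Kxy_eq)
  show "suppF (liftR sqrt_D * fev sqrt_Del (inverse xR)) (\<lambda>n k i j. (i, j) \<in> Hline)"
    by (rule suppF_mult[OF suppF_liftR suppF_fev_inverse_xR]) (auto simp: Hline_iff)
  show "coeffR (S_closed_form $ n) k i 0 = 0" if "n \<ge> 1" "i \<le> 0" for n k i
    unfolding coeffR_y0_S_closed_form using that
    by (intro suppF_coeffR[OF suppF_fev_xR_normalized[OF inv_sqrt_Del_poly0]]) auto
qed

lemma Sk0_eq: "Sk A 0 = S_closed_form"
proof (rule kernel_solution_unique[OF _ kernel_solution_S_closed_form])
  show "kernel_solution (step_poly A) (Sk A 0)"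
    by (rule kernel_solution_walk_gf[OF fin, where P = "\<lambda>k. k = 0" and \<sigma> = "\<lambda>_. 0"])
      (simp add: coeffR_Sk fin)
  show "Sk A 0 $ 0 = S_closed_form $ 0"
    by (simp add: Sk0_nth_0 S_closed_form_def Kxy_eq sqrt_D_nth_0 sqrt_Del_nth_0)
qed

lemma S0z_eq: "S0z A = fev inv_sqrt_Del zR"
proof (intro fps_ext coeffR_eqI)
  fix n k i j
  have "real (acount A 0 k 0 n) = coeffR (Sk A 0 $ n) 0 k 0"
    by (simp add: coeffR_Sk fin)
  also have "\<dots> = coeffR (fev inv_sqrt_Del xR $ n) 0 k 0"
    unfolding Sk0_eq by (rule coeffR_y0_S_closed_form)
  finally show "coeffR (S0z A $ n) k i j = coeffR (fev inv_sqrt_Del zR $ n) k i j"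
    by (simp add: coeffR_S0z fin coeffR_pev_xR coeffR_pev_zR)
qed

lemma suppF_zx_series: "suppF (fps_const zx_series) (\<lambda>n k i j. n = 0 \<and> k = i \<and> 1 \<le> i \<and> j = 0)"
  by (rule suppF_const) (auto simp: suppR_def coeffR_zx_series)

text \<open>Writing \<open>1 = \<Delta>(z)\<^sup>1\<^sup>/\<^sup>2 \<Delta>(z)\<^sup>-\<^sup>1\<^sup>/\<^sup>2\<close>, the part of \<open>K S\<^sup>+\<close> of positive order in t is
  supported on H.\<close>

lemma Kxy_mult_Splus_closed_form:
  "Kxy A * Splus_closed_form =
     fps_const zx_series * (fev sqrt_Del (inverse xR) - fev sqrt_Del zR) * fev inv_sqrt_Del zR +
     fps_const zx_series"
proof -
  have "Kxy A * Splus_closed_form =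
      fps_const zx_series * fev sqrt_Del (inverse xR) * fev inv_sqrt_Del zR"
    using Kxy_mult_cancel by (simp add: Splus_closed_form_def ac_simps)
  then show ?thesis using fev_sqrt_Del_mult_inv[of zR] by (simp add: algebra_simps)
qed

lemma coeffR_y0_Splus_closed_form:
  "coeffR (Splus_closed_form $ n) k i 0 =
     coeffR ((fps_const zx_series * fev inv_sqrt_Del zR * fev inv_sqrt_Del xR * liftR (inverse sqrt_D)) $ n) k i 0"
proof -
  let ?G = "fps_const zx_series * fev sqrt_Del (inverse xR) * fev inv_sqrt_Del zR"
  have "suppF (fps_const zx_series * fev sqrt_Del (inverse xR)) (\<lambda>n k i j. j = 0)"
    by (rule suppF_mult[OF suppF_zx_series suppF_fev_inverse_xR]) auto
  then have suppG: "suppF ?G (\<lambda>n k i j. j = 0)"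
    by (rule suppF_mult[OF _ suppF_fev_zR]) auto
  have "coeffR (Splus_closed_form $ n) k i 0 = coeffR ((?G * inverse (Kxy A)) $ n) k i 0"
    by (simp only: Splus_closed_form_def ac_simps)
  also have "\<dots> = coeffR ((?G * inverse sqrt_delta) $ n) k i 0"
    by (rule coeffR_y0_inverse_Kxy_sqrt_delta[OF suppG])
  also have "?G * inverse sqrt_delta = fps_const zx_series * fev inv_sqrt_Del zR * fev inv_sqrt_Del xR *
      liftR (inverse sqrt_D) * (fev sqrt_Del (inverse xR) * fev inv_sqrt_Del (inverse xR))"
    unfolding inverse_sqrt_delta by (simp only: ac_simps)
  finally show ?thesis by (simp add: fev_sqrt_Del_mult_inv)
qed

lemma kernel_solution_Splus_closed_form: "kernel_solution (step_poly A) Splus_closed_form"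
proof (rule kernel_solutionI)
  show "(1 - fps_X * fps_const (step_poly A)) * Splus_closed_form =
      fps_const zx_series * (fev sqrt_Del (inverse xR) - fev sqrt_Del zR) * fev inv_sqrt_Del zR +
      fps_const zx_series"
    by (simp add: Kxy_mult_Splus_closed_form flip: Kxy_eq)
  show "suppF (fps_const zx_series * (fev sqrt_Del (inverse xR) - fev sqrt_Del zR) * fev inv_sqrt_Del zR)
      (\<lambda>n k i j. (i, j) \<in> Hline)"
    by (rule suppF_mult[OF suppF_zx_series_mult_fev_diff suppF_fev_zR]) (auto simp: Hline_iff)
  have "suppF (fps_const zx_series * fev inv_sqrt_Del zR) (\<lambda>n k i j. 1 \<le> i)"
    by (rule suppF_mult[OF suppF_zx_series suppF_fev_zR]) auto
  then have "suppF (fps_const zx_series * fev inv_sqrt_Del zR * fev inv_sqrt_Del xR) (\<lambda>n k i j. 1 \<le> i)"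
    by (rule suppF_mult[OF _ suppF_fev_xR]) auto
  then have "suppF (fps_const zx_series * fev inv_sqrt_Del zR * fev inv_sqrt_Del xR * liftR (inverse sqrt_D))
      (\<lambda>n k i j. 1 \<le> i)"
    by (rule suppF_mult[OF _ suppF_liftR]) auto
  then show "coeffR (Splus_closed_form $ n) k i 0 = 0" if "i \<le> 0" for n k i
    unfolding coeffR_y0_Splus_closed_form using that by (intro suppF_coeffR) auto
qed

lemma Splus_eq: "Splus A = Splus_closed_form"
proof (rule kernel_solution_unique[OF _ kernel_solution_Splus_closed_form])
  show "kernel_solution (step_poly A) (Splus A)"
    by (rule kernel_solution_walk_gf[OF fin, where P = "\<lambda>k. 0 < k" and \<sigma> = "\<lambda>k. k"])
      (simp add: coeffR_Splus fin)
  show "Splus A $ 0 = Splus_closed_form $ 0"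
    by (simp add: Splus_nth_0 Splus_closed_form_def Kxy_eq sqrt_Del_nth_0 inv_sqrt_Del_nth_0)
qed

lemma fps_sqrt1_Del_ratio:
  "fps_sqrt1 (fev Del (inverse xR) * inverse (fev Del zR)) = fev sqrt_Del (inverse xR) * fev inv_sqrt_Del zR"
proof (rule fps_sqrt1_eqI)
  have "fev inv_sqrt_Del X = inverse (fev sqrt_Del X)" for X
    unfolding inv_sqrt_Del_def by (rule fev_right_inverse[OF sqrt_Del_nth_0])
  moreover have "fev sqrt_Del X ^ 2 = fev Del X" for X
    by (simp add: sqrt_Del_power2 flip: fev_power)
  ultimately show "(fev sqrt_Del (inverse xR) * fev inv_sqrt_Del zR) ^ 2 = fev Del (inverse xR) * inverse (fev Del zR)"
    by (simp add: power_mult_distrib flip: fps_inverse_power)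
  show "(fev sqrt_Del (inverse xR) * fev inv_sqrt_Del zR) $ 0 = 1"
    by (simp add: sqrt_Del_nth_0 inv_sqrt_Del_nth_0)
qed

lemma fps_sqrt1_liftR_D: "fps_sqrt1 (liftR D) = liftR sqrt_D"
proof (rule fps_sqrt1_eqI)
  have "liftR D = liftR (sqrt_D * sqrt_D)" using sqrt_D_power2 by (simp add: power2_eq_square)
  then show "liftR sqrt_D ^ 2 = liftR D" by (simp add: liftR_mult power2_eq_square)
  show "liftR sqrt_D $ 0 = 1" by (simp add: sqrt_D_nth_0)
qed

end

theorem mainTheorem14:
  fixes A :: "(int \<times> int) set"
    and D :: "real fps" and Del Delb :: "real poly fps"
  assumes fin: "finite A"
    and sym: "\<And>i j. (i, j) \<in> A \<Longrightarrow> (i, - j) \<in> A"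
    and small: "\<And>i j. (i, j) \<in> A \<Longrightarrow> \<bar>j\<bar> \<le> 1"
    and A1_ne: "\<exists>i. (i, 1) \<in> A"
    and rev: "\<And>i j. (i, j) \<in> A \<Longrightarrow> (- i, - j) \<in> A"
    and cf: "canon_fact A D Del Delb"
  shows "Splus A = fps_const (zR * xR / (1 - zR * xR)) * inverse (Kxy A)
                   * fps_sqrt1 (fev Del (inverse xR) * inverse (fev Del zR))
       \<and> Splus A = fps_const (zR * xR / (1 - zR * xR)) * S0z A * Sk A 0
                   * inverse (fps_sqrt1 (liftR D))"
proof -
  interpret small_step_model A D Del Delb
    using assms by (rule small_step_model.intro)
  have "fps_const zx_series * S0z A * Sk A 0 * inverse (fps_sqrt1 (liftR D)) =
      Splus_closed_form * (liftR sqrt_D * liftR (inverse sqrt_D))"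
    unfolding S0z_eq Sk0_eq fps_sqrt1_liftR_D inverse_liftR_sqrt_D S_closed_form_def Splus_closed_form_def
    by (simp only: ac_simps)
  then have "Splus A = fps_const zx_series * S0z A * Sk A 0 * inverse (fps_sqrt1 (liftR D))"
    by (simp add: Splus_eq liftR_sqrt_D_mult_inverse)
  with Splus_eq show ?thesis
    unfolding Splus_closed_form_def zx_series_def by (simp add: fps_sqrt1_Del_ratio mult.assoc)
qed

end
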